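(* Fix $\eta>0$ and let $(\lambda^{(k)})_{k\ge0}$ be the iterates of the Accel-EMP procedure (with $\lambda^{(0)}=0$). Then for every $k\ge0$, $$\mathbb{E}\big[L(\lambda^{(k)})\big]-\inf_{\lambda}L(\lambda)\ \le\ \frac{G(\eta)^2}{(k+2)^2},\qquad G(\eta):=24md(m+n)\Big(\sqrt\eta\,\|C\|_\infty+\frac{\log d}{\sqrt\eta}\Big).$$
   Context: Let $G=(V,E)$ be a finite undirected graph with $n=|V|$, $m=|E|$, every vertex incident to at least one edge; $N_i=\{e\in E:i\in e\}$. $\chi$ is a finite label set with $d=|\chi|\ge2$. Costs $C_i\in\mathbb{R}^\chi$, $C_e\in\mathbb{R}^{\chi^2}$; $\|C\|_\infty$ is the largest absolute entry; for $e=\{i,j\}$, $x_e=(x_i,x_j)$, $(x_e)_i=x_i$. Dual variables $\lambda\in\mathbb{R}^{2md}$ with blocks $\lambda_{e,i}\in\mathbb{R}^\chi$, and $$L(\lambda)=\frac1\eta\sum_{i\in V}\log\sum_{x\in\chi}\exp\Big(-\eta C_i(x)+\eta\sum_{e\in N_i}\lambda_{e,i}(x)\Big)+\frac1\eta\sum_{e\in E}\log\sum_{x_e\in\chi^2}\exp\Big(-\eta C_e(x_e)-\eta\sum_{i\in e}\lambda_{e,i}((x_e)_i)\Big).$$ $\mu^\lambda_i$, $\mu^\lambda_e$ are the normalized distributions proportional to the exponentials inside the two sums; $S^\lambda_{e,i}(x)=\sum_{x_e:(x_e)_i=x}\mu^\lambda_e(x_e)$; slack $\nu^\lambda_{e,i}=S^\lambda_{e,i}-\mu^\lambda_i$.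 Accel-EMP: $\lambda^{(0)}=v^{(0)}=0$, $\theta_{-1}=1$; for $k\ge0$: $\theta_k=\frac{-\theta_{k-1}^2+\sqrt{\theta_{k-1}^4+4\theta_{k-1}^2}}{2}$; $y^{(k)}=\theta_kv^{(k)}+(1-\theta_k)\lambda^{(k)}$; sample $(e_k,i_k)$ independently and uniformly from $\{(e,i):e\in E,i\in e\}$; $\lambda^{(k+1)}$ equals $y^{(k)}$ except block $(e_k,i_k)$ is set to $y^{(k)}_{e_k,i_k}(x)+\frac{1}{2\eta}\log(S^{y^{(k)}}_{e_k,i_k}(x)/\mu^{y^{(k)}}_{i_k}(x))$; $v^{(k+1)}$ equals $v^{(k)}$ except $v^{(k+1)}_{e_k,i_k}=v^{(k)}_{e_k,i_k}+\frac{1}{4m\eta\theta_k}\nu^{y^{(k)}}_{e_k,i_k}$. *)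

theory Defs
  imports "HOL-Analysis.Analysis"
begin

(* Graph: vertex set V ('v set), edges E (2-element subsets of V).  An edge configuration x_e in chi^2 for e = {i,j}
   is a map assigning a label to each endpoint, i.e. an element of PiE e (\<lambda>_. X);
   (x_e)_i = x_e i.
   Dual variables lam e i x  (block lambda_{e,i} evaluated at label x). *)

type_synonym ('v,'x) dual = "'v set \<Rightarrow> 'v \<Rightarrow> 'x \<Rightarrow> real"

definition edge_configs :: "'x set \<Rightarrow> 'v set \<Rightarrow> ('v \<Rightarrow> 'x) set" where
  "edge_configs X e = PiE e (\<lambda>_. X)"

definition nbhd :: "'v set set \<Rightarrow> 'v \<Rightarrow> 'v set set" where
  "nbhd E i = {e \<in> E. i \<in> e}"

definition vexp :: "'v set set \<Rightarrow> ('v \<Rightarrow> 'x \<Rightarrow> real) \<Rightarrow> real \<Rightarrow> ('v,'x) dual \<Rightarrow> 'v \<Rightarrow> 'x \<Rightarrow> real" where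
  "vexp E Cv eta lam i x = exp (- eta * Cv i x + eta * (\<Sum>e\<in>nbhd E i. lam e i x))"

definition eexp :: "('v set \<Rightarrow> ('v \<Rightarrow> 'x) \<Rightarrow> real) \<Rightarrow> real \<Rightarrow> ('v,'x) dual \<Rightarrow> 'v set \<Rightarrow> ('v \<Rightarrow> 'x) \<Rightarrow> real" where
  "eexp Ce eta lam e xe = exp (- eta * Ce e xe - eta * (\<Sum>i\<in>e. lam e i (xe i)))"

definition Lfun :: "'v set \<Rightarrow> 'v set set \<Rightarrow> 'x set \<Rightarrow> ('v \<Rightarrow> 'x \<Rightarrow> real) \<Rightarrow>
    ('v set \<Rightarrow> ('v \<Rightarrow> 'x) \<Rightarrow> real) \<Rightarrow> real \<Rightarrow> ('v,'x) dual \<Rightarrow> real" where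
  "Lfun V E X Cv Ce eta lam =
     (1/eta) * (\<Sum>i\<in>V. ln (\<Sum>x\<in>X. vexp E Cv eta lam i x))
   + (1/eta) * (\<Sum>e\<in>E. ln (\<Sum>xe\<in>edge_configs X e. eexp Ce eta lam e xe))"

definition mu_v :: "'v set set \<Rightarrow> 'x set \<Rightarrow> ('v \<Rightarrow> 'x \<Rightarrow> real) \<Rightarrow> real \<Rightarrow> ('v,'x) dual \<Rightarrow> 'v \<Rightarrow> 'x \<Rightarrow> real" where
  "mu_v E X Cv eta lam i x = vexp E Cv eta lam i x / (\<Sum>y\<in>X. vexp E Cv eta lam i y)"

definition mu_e :: "'x set \<Rightarrow> ('v set \<Rightarrow> ('v \<Rightarrow> 'x) \<Rightarrow> real) \<Rightarrow> real \<Rightarrow> ('v,'x) dual \<Rightarrow> 'v set \<Rightarrow> ('v \<Rightarrow> 'x) \<Rightarrow> real" where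
  "mu_e X Ce eta lam e xe = eexp Ce eta lam e xe / (\<Sum>ye\<in>edge_configs X e. eexp Ce eta lam e ye)"

definition Smarg :: "'x set \<Rightarrow> ('v set \<Rightarrow> ('v \<Rightarrow> 'x) \<Rightarrow> real) \<Rightarrow> real \<Rightarrow> ('v,'x) dual \<Rightarrow> 'v set \<Rightarrow> 'v \<Rightarrow> 'x \<Rightarrow> real" where
  "Smarg X Ce eta lam e i x = (\<Sum>xe\<in>{xe \<in> edge_configs X e. xe i = x}. mu_e X Ce eta lam e xe)"

(* theta_seq k = theta_{k-1};  theta_seq 0 = theta_{-1} = 1 *)
fun theta_seq :: "nat \<Rightarrow> real" where
  "theta_seq 0 = 1"
| "theta_seq (Suc k) = (sqrt ((theta_seq k) ^ 4 + 4 * (theta_seq k) ^ 2) - (theta_seq k) ^ 2) / 2"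

definition accel_step :: "'v set set \<Rightarrow> 'x set \<Rightarrow> ('v \<Rightarrow> 'x \<Rightarrow> real) \<Rightarrow>
    ('v set \<Rightarrow> ('v \<Rightarrow> 'x) \<Rightarrow> real) \<Rightarrow> real \<Rightarrow> nat \<Rightarrow> ('v,'x) dual \<times> ('v,'x) dual \<Rightarrow>
    'v set \<times> 'v \<Rightarrow> ('v,'x) dual \<times> ('v,'x) dual" where
  "accel_step E X Cv Ce eta k st p =
    (let lam = fst st; v = snd st; th = theta_seq (Suc k);
         y = (\<lambda>e i x. th * v e i x + (1 - th) * lam e i x);
         ek = fst p; ik = snd p;
         lam' = (\<lambda>e i x. if e = ek \<and> i = ik
                  then y e i x + 1 / (2 * eta) *
                       ln (Smarg X Ce eta y e i x / mu_v E X Cv eta y i x)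
                  else y e i x);
         v' = (\<lambda>e i x. if e = ek \<and> i = ik
                  then v e i x + 1 / (4 * real (card E) * eta * th) *
                       (Smarg X Ce eta y e i x - mu_v E X Cv eta y i x)
                  else v e i x)
     in (lam', v'))"

fun accel_iter :: "'v set set \<Rightarrow> 'x set \<Rightarrow> ('v \<Rightarrow> 'x \<Rightarrow> real) \<Rightarrow>
    ('v set \<Rightarrow> ('v \<Rightarrow> 'x) \<Rightarrow> real) \<Rightarrow> real \<Rightarrow> (nat \<Rightarrow> 'v set \<times> 'v) \<Rightarrow> nat \<Rightarrow>
    ('v,'x) dual \<times> ('v,'x) dual" where
  "accel_iter E X Cv Ce eta s 0 = ((\<lambda>_ _ _. 0), (\<lambda>_ _ _. 0))"
| "accel_iter E X Cv Ce eta s (Suc k) =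
     accel_step E X Cv Ce eta k (accel_iter E X Cv Ce eta s k) (s k)"

definition pairs :: "'v set set \<Rightarrow> ('v set \<times> 'v) set" where
  "pairs E = {(e, i). e \<in> E \<and> i \<in> e}"

(* E[L(lambda^(k))]: lambda^(k) depends only on the first k i.i.d. uniform samples,
   so the expectation is the uniform average over all sample lists of length k *)
definition expected_L :: "'v set \<Rightarrow> 'v set set \<Rightarrow> 'x set \<Rightarrow> ('v \<Rightarrow> 'x \<Rightarrow> real) \<Rightarrow>
    ('v set \<Rightarrow> ('v \<Rightarrow> 'x) \<Rightarrow> real) \<Rightarrow> real \<Rightarrow> nat \<Rightarrow> real" where
  "expected_L V E X Cv Ce eta k =
     (\<Sum>xs\<in>{xs. set xs \<subseteq> pairs E \<and> length xs = k}.
        Lfun V E X Cv Ce eta (fst (accel_iter E X Cv Ce eta (\<lambda>j. xs ! j) k)))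
     / real (card (pairs E)) ^ k"

definition cost_norm :: "'v set \<Rightarrow> 'v set set \<Rightarrow> 'x set \<Rightarrow> ('v \<Rightarrow> 'x \<Rightarrow> real) \<Rightarrow>
    ('v set \<Rightarrow> ('v \<Rightarrow> 'x) \<Rightarrow> real) \<Rightarrow> real" where
  "cost_norm V E X Cv Ce =
     Max ({\<bar>Cv i x\<bar> | i x. i \<in> V \<and> x \<in> X} \<union>
          {\<bar>Ce e xe\<bar> | e xe. e \<in> E \<and> xe \<in> edge_configs X e})"

end

theory Submission
  imports Defs
begin

text \<open>
  L is convex, and its partial gradient in the block \<open>\<lambda>\<^sub>e\<^sub>,\<^sub>i\<close> is \<open>\<mu>\<^sub>i - S\<^sub>e\<^sub>,\<^sub>i\<close>.
  The EMP update of a block minimises L exactly in that block: it moves \<open>\<mu>\<^sub>i\<close> and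
  \<open>S\<^sub>e\<^sub>,\<^sub>i\<close> to their geometric mean and changes L by \<open>2/\<eta>\<close> times the logarithm of
  their Bhattacharyya coefficient, which by the Hellinger inequality is at most
  \<open>-\<parallel>\<mu>\<^sub>i - S\<^sub>e\<^sub>,\<^sub>i\<parallel>\<^sup>2/(4\<eta>)\<close>. Together with convexity this makes the Lyapunov function
  of accelerated randomised coordinate descent,
  \<open>(L(\<lambda>) - L(u))/\<theta>\<^sup>2 + 4m\<^sup>2\<eta>\<parallel>v - u\<parallel>\<^sup>2\<close>, non-increasing in expectation, and \<open>\<theta>\<^sub>k \<le> 2/(k+2)\<close>.
  Since L is invariant under adding a constant to a block, the comparison point u may be
  centred blockwise; then L grows at least like \<open>\<parallel>u\<parallel>/(2d) - (n+m)\<parallel>C\<parallel>\<^sub>\<infinity>\<close>, so every u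
  with \<open>L(u) \<le> L(0)\<close> has \<open>\<parallel>u\<parallel> \<le> 4d(n+m)(\<parallel>C\<parallel>\<^sub>\<infinity> + log d/\<eta>)\<close>, which bounds the
  initial potential by \<open>G(\<eta>)\<^sup>2/4\<close>.
\<close>

section \<open>Inequalities for log-sum-exp and the Hellinger distance\<close>

lemma exp_expectation_le:
  fixes p c :: "'a \<Rightarrow> real"
  assumes "finite A" "A \<noteq> {}" "\<And>x. x \<in> A \<Longrightarrow> p x \<ge> 0" "(\<Sum>x\<in>A. p x) = 1"
  shows "exp (\<Sum>x\<in>A. p x * c x) \<le> (\<Sum>x\<in>A. p x * exp (c x))"
  using convex_on_sum[OF assms(1,2) exp_convex, of p c] assms by auto

lemma le_one_of_sum_eq_one:
  fixes f :: "'a \<Rightarrow> real"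
  assumes "finite A" "\<And>x. x \<in> A \<Longrightarrow> f x \<ge> 0" "sum f A = 1" "x \<in> A"
  shows "f x \<le> 1"
  using member_le_sum[of x A f] assms by simp

lemma expectation_le_ln_sum_exp:
  fixes p a :: "'a \<Rightarrow> real"
  assumes "finite A" "A \<noteq> {}" "\<And>x. x \<in> A \<Longrightarrow> p x \<ge> 0" "(\<Sum>x\<in>A. p x) = 1"
  shows "(\<Sum>x\<in>A. p x * a x) \<le> ln (\<Sum>x\<in>A. exp (a x))"
proof -
  have "exp (\<Sum>x\<in>A. p x * a x) \<le> (\<Sum>x\<in>A. p x * exp (a x))"
    by (rule exp_expectation_le[OF assms])
  also have "\<dots> \<le> (\<Sum>x\<in>A. exp (a x))"
    using assms(3) le_one_of_sum_eq_one[OF assms(1,3,4)] by (intro sum_mono mult_left_le_one_le) auto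
  finally show ?thesis
    using assms(1,2) by (subst ln_ge_iff) (auto intro: sum_pos)
qed

lemma ln_sum_exp_gradient_ineq:
  fixes a b :: "'a \<Rightarrow> real"
  assumes "finite A" "A \<noteq> {}" "eta > 0"
  shows "1/eta * ln (\<Sum>x\<in>A. exp (eta * a x))
           + (\<Sum>x\<in>A. exp (eta * a x) / (\<Sum>y\<in>A. exp (eta * a y)) * (b x - a x))
         \<le> 1/eta * ln (\<Sum>x\<in>A. exp (eta * b x))"
proof -
  define Z where "Z = (\<Sum>y\<in>A. exp (eta * a y))"
  define p where "p x = exp (eta * a x) / Z" for x
  have Z: "Z > 0" unfolding Z_def using assms by (intro sum_pos) auto
  have "exp (\<Sum>x\<in>A. p x * (eta * (b x - a x))) \<le> (\<Sum>x\<in>A. p x * exp (eta * (b x - a x)))"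
    by (rule exp_expectation_le)
       (use assms Z in \<open>auto simp: p_def Z_def sum_divide_distrib[symmetric]\<close>)
  also have "\<dots> = (\<Sum>x\<in>A. exp (eta * b x)) / Z"
    by (simp add: p_def sum_divide_distrib right_diff_distrib exp_diff)
  finally have "eta * (\<Sum>x\<in>A. p x * (b x - a x)) \<le> ln ((\<Sum>x\<in>A. exp (eta * b x)) / Z)"
    using Z assms(1,2) by (subst ln_ge_iff) (auto simp: sum_distrib_left ac_simps intro!: sum_pos divide_pos_pos)
  also have "\<dots> = ln (\<Sum>x\<in>A. exp (eta * b x)) - ln Z"
    using Z assms(1,2) by (intro ln_divide_pos) (auto intro: sum_pos)
  finally have "(\<Sum>x\<in>A. p x * (b x - a x)) \<le> 1/eta * ln (\<Sum>x\<in>A. exp (eta * b x)) - 1/eta * ln Z"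
    using assms(3) by (simp add: field_simps)
  then show ?thesis
    unfolding p_def Z_def by linarith
qed

lemma sum_PiE_prod_marginal:
  fixes q :: "'v \<Rightarrow> 'x \<Rightarrow> real" and f :: "'x \<Rightarrow> real"
  assumes "finite e" "finite X" "i \<in> e" "\<And>j. j \<in> e \<Longrightarrow> (\<Sum>x\<in>X. q j x) = 1"
  shows "(\<Sum>g\<in>PiE e (\<lambda>_. X). (\<Prod>j\<in>e. q j (g j)) * f (g i)) = (\<Sum>x\<in>X. q i x * f x)"
proof -
  define F where "F j y = q j y * (if j = i then f y else 1)" for j y
  have "(\<Sum>g\<in>PiE e (\<lambda>_. X). (\<Prod>j\<in>e. q j (g j)) * f (g i))
      = (\<Sum>g\<in>PiE e (\<lambda>_. X). \<Prod>j\<in>e. F j (g j))"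
    using assms(1,3) by (intro sum.cong) (simp_all add: F_def prod.distrib prod.delta)
  also have "\<dots> = (\<Prod>j\<in>e. \<Sum>y\<in>X. F j y)"
    by (rule prod_sum_PiE[symmetric]) (use assms in auto)
  also have "\<dots> = (\<Prod>j\<in>e. if j = i then (\<Sum>y\<in>X. q i y * f y) else 1)"
    using assms(4) by (intro prod.cong) (auto simp: F_def)
  also have "\<dots> = (\<Sum>y\<in>X. q i y * f y)"
    using assms by (simp add: prod.delta)
  finally show ?thesis .
qed

lemma sq_diff_le_sq_sqrt_diff:
  fixes a b :: real
  assumes "0 \<le> a" "a \<le> 1" "0 \<le> b" "b \<le> 1"
  shows "(a - b)^2 \<le> 4 * (sqrt a - sqrt b)^2"
proof -
  have factor: "a - b = (sqrt a - sqrt b) * (sqrt a + sqrt b)"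
    using assms by (simp add: algebra_simps flip: power2_eq_square)
  have "sqrt a + sqrt b \<le> 1 + 1"
    using assms by (intro add_mono) auto
  then have bound: "(sqrt a + sqrt b)^2 \<le> 2^2"
    using assms by (intro power_mono) auto
  have "(a - b)^2 = (sqrt a - sqrt b)^2 * (sqrt a + sqrt b)^2"
    unfolding factor by (simp add: power_mult_distrib)
  also have "\<dots> \<le> (sqrt a - sqrt b)^2 * 2^2"
    using bound by (rule mult_left_mono) simp
  finally show ?thesis
    by simp
qed

lemma sum_sq_diff_le_hellinger:
  fixes p q :: "'a \<Rightarrow> real"
  assumes "finite A" "\<And>x. x \<in> A \<Longrightarrow> p x \<ge> 0" "\<And>x. x \<in> A \<Longrightarrow> q x \<ge> 0"
    and "(\<Sum>x\<in>A. p x) = 1" "(\<Sum>x\<in>A. q x) = 1"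
  shows "(\<Sum>x\<in>A. (p x - q x)^2) \<le> 8 * (1 - (\<Sum>x\<in>A. sqrt (p x * q x)))"
proof -
  have "(\<Sum>x\<in>A. (p x - q x)^2) \<le> (\<Sum>x\<in>A. 4 * (sqrt (p x) - sqrt (q x))^2)"
    using assms le_one_of_sum_eq_one[of A p] le_one_of_sum_eq_one[of A q]
    by (intro sum_mono sq_diff_le_sq_sqrt_diff) auto
  also have "\<dots> = (\<Sum>x\<in>A. 4 * (p x + q x - 2 * sqrt (p x * q x)))"
    using assms(2,3) by (intro sum.cong) (auto simp: power2_eq_square algebra_simps real_sqrt_mult)
  also have "\<dots> = 8 * (1 - (\<Sum>x\<in>A. sqrt (p x * q x)))"
    using assms(4,5) by (simp add: sum_distrib_left sum_subtractf sum.distrib flip: sum_distrib_left)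
  finally show ?thesis .
qed

lemma sqrt_geometric_mean:
  fixes a b :: real
  assumes "a > 0" "b > 0"
  shows "a * sqrt (b / a) = sqrt (a * b)" and "b / sqrt (b / a) = sqrt (a * b)"
proof -
  have "sqrt a > 0" "sqrt b > 0" "a = sqrt a * sqrt a" "b = sqrt b * sqrt b"
    using assms by simp_all
  then show "a * sqrt (b / a) = sqrt (a * b)" and "b / sqrt (b / a) = sqrt (a * b)"
    by (simp_all add: real_sqrt_divide real_sqrt_mult field_simps)
qed

lemma ln_ge_half: "2 \<le> x \<Longrightarrow> 1/2 \<le> ln (x::real)"
proof -
  assume "2 \<le> x"
  have "exp (1/2::real) * exp (1/2) \<le> 3"
    using exp_le by (simp flip: exp_add)
  have "exp (1/2::real) \<le> 2"
  proof (rule ccontr)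
    assume "\<not> exp (1/2::real) \<le> 2"
    then have "2 * 2 < exp (1/2::real) * exp (1/2)"
      by (intro mult_strict_mono) auto
    then show False
      using \<open>exp (1/2::real) * exp (1/2) \<le> 3\<close> by simp
  qed
  then show ?thesis
    using \<open>2 \<le> x\<close> by (subst ln_ge_iff) auto
qed

section \<open>Arithmetic of the accelerated scheme\<close>

lemma theta_seq_Suc_sq: "theta_seq (Suc k)^2 = theta_seq k^2 * (1 - theta_seq (Suc k))"
proof -
  define t where "t = theta_seq k"
  define s where "s = sqrt (t^4 + 4 * t^2)"
  have s2: "s^2 = t^4 + 4 * t^2"
    unfolding s_def by simp
  have "theta_seq (Suc k) = (s - t^2) / 2"
    by (simp add: s_def t_def)
  moreover have "((s - t^2) / 2)^2 = t^2 * (1 - (s - t^2) / 2)"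
    using s2 by (simp add: power2_eq_square field_simps power4_eq_xxxx)
  ultimately show ?thesis
    by (simp add: t_def)
qed

lemma theta_seq_bounds: "0 < theta_seq k \<and> theta_seq k \<le> 1"
proof (induction k)
  case 0
  then show ?case by simp
next
  case (Suc k)
  define t t' where "t = theta_seq k" and "t' = theta_seq (Suc k)"
  have "t^2 < sqrt (t^4 + 4 * t^2)"
    using Suc unfolding t_def by (intro real_less_rsqrt) (simp flip: power_mult)
  then have "0 < t'"
    by (simp add: t_def t'_def)
  moreover have "t'^2 = t^2 * (1 - t')"
    unfolding t_def t'_def by (rule theta_seq_Suc_sq)
  then have "t' < 1"
    using \<open>0 < t'\<close> by (metis diff_gt_0_iff_gt zero_less_mult_iff zero_less_power zero_le_power2 not_less)
  ultimately show ?case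
    by (simp add: t'_def del: theta_seq.simps)
qed

lemma inverse_theta_seq_Suc_ge: "1 / theta_seq (Suc k) \<ge> 1 / theta_seq k + 1/2"
proof -
  define t t' where "t = theta_seq k" and "t' = theta_seq (Suc k)"
  have pos: "0 < t" "0 < t'" "t' \<le> 1"
    using theta_seq_bounds[of k] theta_seq_bounds[of "Suc k"] unfolding t_def t'_def
    by (auto simp del: theta_seq.simps)
  have "t'^2 = t^2 * (1 - t')"
    unfolding t_def t'_def by (rule theta_seq_Suc_sq)
  then have quadratic: "(1/t')^2 - 1/t' = (1/t)^2"
    using pos by (simp add: field_simps power2_eq_square)
  have "1/t' \<ge> 1/t + 1/2"
  proof (rule ccontr)
    assume "\<not> 1/t' \<ge> 1/t + 1/2"
    moreover have "1 \<le> 1/t'" "0 < 1/t"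
      using pos by auto
    ultimately have "0 < (1/t + 1/2 - 1/t') * (1/t + 1/2 + 1/t' - 1)"
      by (intro mult_pos_pos) auto
    then show False
      using quadratic by (simp add: power2_eq_square algebra_simps)
  qed
  then show ?thesis
    by (simp add: t_def t'_def del: theta_seq.simps)
qed

lemma theta_seq_le: "theta_seq k \<le> 2 / (real k + 2)"
proof -
  have "(real k + 2) / 2 \<le> 1 / theta_seq k"
  proof (induction k)
    case (Suc k)
    then show ?case
      using inverse_theta_seq_Suc_ge[of k] by (simp del: theta_seq.simps)
  qed simp
  then show ?thesis
    using theta_seq_bounds[of k] by (simp add: field_simps)
qed

lemma theta_seq_sq_le: "theta_seq k^2 \<le> 4 / (real k + 2)^2"
proof -
  have "theta_seq k^2 \<le> (2 / (real k + 2))^2"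
    using theta_seq_le theta_seq_bounds by (intro power_mono) (auto intro: less_imp_le)
  then show ?thesis
    by (simp add: power_divide)
qed

text \<open>One step of the potential argument over the reals: \<open>th\<close> and \<open>th'\<close> are
  \<open>\<theta>\<^sub>k\<close> and \<open>\<theta>\<^sub>k\<^sub>-\<^sub>1\<close>; \<open>SL\<close> and \<open>SD\<close> are the sums over all \<open>N\<close> blocks of the
  new objective values and squared distances to \<open>u\<close>, and \<open>SG\<close> and \<open>SI\<close> those of the
  squared block gradients at \<open>y\<close> and of their pairings with \<open>v - u\<close>; \<open>gu\<close> and \<open>gl\<close>
  pair the gradient at \<open>y\<close> with \<open>u - y\<close> and \<open>\<lambda> - y\<close>.\<close>

lemma accelerated_potential_arith:
  fixes N m eta th th' SL SG SD SI Dv Ly Lu Ll gu gl :: real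
  assumes N: "N = 2 * m" and m: "m > 0" and eta: "eta > 0"
    and th: "0 < th" "th \<le> 1" and th': "th' > 0" and th_rec: "th^2 = th'^2 * (1 - th)"
    and descent: "SL \<le> N * Ly - 1/(4*eta) * SG"
    and dist: "SD = N * Dv - 2 * (1/(4*m*eta*th)) * SI + (1/(4*m*eta*th))^2 * SG"
    and conv_u: "Ly + gu \<le> Lu" and conv_l: "Ly + gl \<le> Ll"
    and inner: "th * SI = - th * gu - (1 - th) * gl"
  shows "1/th^2 * (SL - N * Lu) + (4*m^2*eta) * SD \<le> N * (1/th'^2 * (Ll - Lu) + (4*m^2*eta) * Dv)"
proof -
  have "1/th^2 * (SL - N * Lu) + (4*m^2*eta) * SD
      = (SL + SG/(4*eta) - N*Lu - N * (th * SI)) / th^2 + (4*m^2*eta) * N * Dv"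
    unfolding dist N using m eta th by (simp add: field_simps power2_eq_square)
  also have "\<dots> = (SL + SG/(4*eta) - N*Lu + N * (th * gu + (1 - th) * gl)) / th^2 + (4*m^2*eta) * N * Dv"
    unfolding inner by (simp add: algebra_simps)
  also have "\<dots> \<le> (N * Ly - N*Lu + N * (th * (Lu - Ly) + (1 - th) * (Ll - Ly))) / th^2 + (4*m^2*eta) * N * Dv"
  proof -
    have "th * gu + (1 - th) * gl \<le> th * (Lu - Ly) + (1 - th) * (Ll - Ly)"
      using conv_u conv_l th by (intro add_mono mult_left_mono) auto
    then have "N * (th * gu + (1 - th) * gl) \<le> N * (th * (Lu - Ly) + (1 - th) * (Ll - Ly))"
      using N m by (intro mult_left_mono) auto
    then show ?thesis
      using descent th by (intro add_right_mono divide_right_mono) auto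
  qed
  also have "\<dots> = N * ((1 - th) / th^2 * (Ll - Lu)) + (4*m^2*eta) * N * Dv"
    by (simp add: algebra_simps add_divide_distrib diff_divide_distrib)
  also have "(1 - th) / th^2 = 1 / th'^2"
    using th_rec th th' by (simp add: field_simps)
  finally show ?thesis
    by (simp add: algebra_simps)
qed

lemma accel_emp_rate_constant:
  fixes m d n C l eta :: real
  assumes "m \<ge> 1" "d \<ge> 2" "n \<ge> 0" "C \<ge> 0" "l \<ge> 1/2" "eta > 0"
  defines "R \<equiv> (n + m) * (C + l / eta)"
  shows "4 * (2 * R + 64 * m^2 * d^2 * eta * R^2) \<le> (24 * m * d * (m + n) * (sqrt eta * C + l / sqrt eta))^2"
proof -
  have "l / sqrt eta = sqrt eta * (l / eta)"
    using assms(6) by (metis divide_divide_eq_right real_div_sqrt less_imp_le times_divide_eq_right mult.commute)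
  then have "(m + n) * (sqrt eta * C + l / sqrt eta) = sqrt eta * R"
    by (simp add: R_def algebra_simps)
  then have rhs: "(24 * m * d * (m + n) * (sqrt eta * C + l / sqrt eta))^2 = 576 * m^2 * d^2 * eta * R^2"
    using assms(6) by (simp add: power_mult_distrib mult.assoc)
  have "eta * R = (n + m) * (eta * C + l)"
    using assms(6) by (simp add: R_def field_simps)
  also have "\<dots> \<ge> 1 * (1/2)"
    using assms by (intro mult_mono) (auto simp: add_increasing)
  finally have etaR: "eta * R \<ge> 1/2" by simp
  have "1 \<le> m^2"
    using assms(1) by (simp add: one_le_power)
  moreover have "2^2 \<le> d^2"
    using assms(2) by (intro power_mono) auto
  ultimately have "1 * 4 \<le> m^2 * d^2"
    by (intro mult_mono) auto
  then have "4 * (1/2) \<le> (m^2 * d^2) * (eta * R)"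
    using etaR by (intro mult_mono) auto
  then have "8 \<le> 320 * (m^2 * d^2) * (eta * R)"
    by (simp add: ac_simps)
  moreover have "R \<ge> 0"
    using assms unfolding R_def by (intro mult_nonneg_nonneg add_nonneg_nonneg divide_nonneg_pos) auto
  ultimately have "8 * R \<le> 320 * (m^2 * d^2) * (eta * R) * R"
    by (intro mult_right_mono) auto
  then show ?thesis
    unfolding rhs by (simp add: power2_eq_square algebra_simps)
qed

lemma sum_lists_length_Suc:
  fixes f :: "'a list \<Rightarrow> real"
  shows "(\<Sum>xs\<in>{xs. set xs \<subseteq> A \<and> length xs = Suc k}. f xs)
       = (\<Sum>xs\<in>{xs. set xs \<subseteq> A \<and> length xs = k}. \<Sum>b\<in>A. f (xs @ [b]))"
proof -
  let ?Lk = "{xs. set xs \<subseteq> A \<and> length xs = k}"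
  have "{xs. set xs \<subseteq> A \<and> length xs = Suc k} = (\<lambda>(xs, b). xs @ [b]) ` (?Lk \<times> A)"
  proof (intro equalityI subsetI)
    fix xs assume "xs \<in> {xs. set xs \<subseteq> A \<and> length xs = Suc k}"
    moreover from this have "xs \<noteq> []"
      by auto
    ultimately have "xs = butlast xs @ [last xs]" "(butlast xs, last xs) \<in> ?Lk \<times> A"
      by (auto dest: in_set_butlastD)
    then show "xs \<in> (\<lambda>(xs, b). xs @ [b]) ` (?Lk \<times> A)"
      by (metis (mono_tags, lifting) case_prod_conv image_eqI)
  qed auto
  moreover have "inj_on (\<lambda>(xs, b). xs @ [b]) (?Lk \<times> A)"
    by (auto simp: inj_on_def)
  ultimately show ?thesis
    by (simp add: sum.reindex sum.cartesian_product split_def)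
qed

lemma accel_iter_cong:
  "(\<And>j. j < k \<Longrightarrow> s j = s' j) \<Longrightarrow> accel_iter E X Cv Ce eta s k = accel_iter E X Cv Ce eta s' k"
  by (induction k) auto

lemma accel_iter_snoc:
  "accel_iter E X Cv Ce eta (\<lambda>j. (xs @ [b]) ! j) (Suc (length xs))
     = accel_step E X Cv Ce eta (length xs) (accel_iter E X Cv Ce eta (\<lambda>j. xs ! j) (length xs)) b"
proof -
  have "accel_iter E X Cv Ce eta (\<lambda>j. (xs @ [b]) ! j) (length xs) = accel_iter E X Cv Ce eta (\<lambda>j. xs ! j) (length xs)"
    by (rule accel_iter_cong) (simp add: nth_append)
  then show ?thesis
    by simp
qed

section \<open>The dual objective\<close>

locale emp_model =
  fixes V :: "'v set" and E :: "'v set set" and X :: "'x set"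
    and Cv :: "'v \<Rightarrow> 'x \<Rightarrow> real" and Ce :: "'v set \<Rightarrow> ('v \<Rightarrow> 'x) \<Rightarrow> real" and eta :: real
  assumes finite_V: "finite V" and edges: "\<forall>e\<in>E. e \<subseteq> V \<and> card e = 2"
    and finite_X: "finite X" and card_X: "card X \<ge> 2"
    and eta_pos: "eta > 0"
begin

abbreviation "P \<equiv> pairs E"
abbreviation "L \<equiv> Lfun V E X Cv Ce eta"
abbreviation "Cn \<equiv> cost_norm V E X Cv Ce"

lemma edge_subset: "e \<in> E \<Longrightarrow> e \<subseteq> V"
  using edges by auto

lemma card_edge: "e \<in> E \<Longrightarrow> card e = 2"
  using edges by auto

lemma finite_edge: "e \<in> E \<Longrightarrow> finite e"
  using edge_subset finite_V finite_subset by blast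

lemma edge_nonempty: "e \<in> E \<Longrightarrow> e \<noteq> {}"
  using card_edge by fastforce

lemma finite_E: "finite E"
  using finite_V edges by (auto intro: finite_subset[of _ "Pow V"])

lemma X_nonempty: "X \<noteq> {}"
  using card_X by auto

lemma pairs_eq_Sigma: "P = Sigma E (\<lambda>e. e)"
  unfolding pairs_def by auto

lemma finite_pairs: "finite P"
  unfolding pairs_eq_Sigma using finite_E finite_edge by (intro finite_SigmaI) auto

lemma card_pairs: "card P = 2 * card E"
  unfolding pairs_eq_Sigma using finite_E finite_edge card_edge by (subst card_SigmaI) auto

lemma sum_pairs_by_edges: "(\<Sum>e\<in>E. \<Sum>i\<in>e. f e i) = (\<Sum>(e,i)\<in>P. f e i)"
  unfolding pairs_eq_Sigma by (rule sum.Sigma) (use finite_E finite_edge in auto)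

lemma sum_pairs_by_vertices: "(\<Sum>i\<in>V. \<Sum>e\<in>nbhd E i. f e i) = (\<Sum>(e,i)\<in>P. f e i)"
proof -
  have "(\<Sum>i\<in>V. \<Sum>e\<in>nbhd E i. f e i) = (\<Sum>e\<in>E. \<Sum>i\<in>{i\<in>V. i \<in> e}. f e i)"
    unfolding nbhd_def using finite_V finite_E by (rule sum.swap_restrict)
  also have "\<dots> = (\<Sum>e\<in>E. \<Sum>i\<in>e. f e i)"
  proof (rule sum.cong[OF refl])
    fix e assume "e \<in> E"
    then have "{i\<in>V. i \<in> e} = e"
      using edge_subset by auto
    then show "(\<Sum>i\<in>{i\<in>V. i \<in> e}. f e i) = (\<Sum>i\<in>e. f e i)"
      by simp
  qed
  finally show ?thesis
    by (simp add: sum_pairs_by_edges)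
qed

lemma finite_edge_configs: "e \<in> E \<Longrightarrow> finite (edge_configs X e)"
  unfolding edge_configs_def using finite_edge finite_X by (intro finite_PiE) auto

lemma card_edge_configs: "e \<in> E \<Longrightarrow> card (edge_configs X e) = card X ^ 2"
  unfolding edge_configs_def using finite_edge card_edge by (simp add: card_PiE)

lemma edge_config_in_X: "xe \<in> edge_configs X e \<Longrightarrow> i \<in> e \<Longrightarrow> xe i \<in> X"
  unfolding edge_configs_def by auto

lemma edge_configs_fiber_nonempty:
  assumes "i \<in> e" "x \<in> X"
  shows "{xe \<in> edge_configs X e. xe i = x} \<noteq> {}"
proof -
  have "(\<lambda>j. if j \<in> e then x else undefined) \<in> {xe \<in> edge_configs X e. xe i = x}"
    unfolding edge_configs_def using assms by auto
  then show ?thesis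
    by blast
qed

lemma edge_configs_nonempty:
  assumes "e \<in> E"
  shows "edge_configs X e \<noteq> {}"
proof -
  obtain i x where "i \<in> e" "x \<in> X"
    using edge_nonempty[OF assms] X_nonempty by blast
  then show ?thesis
    using edge_configs_fiber_nonempty by fastforce
qed

lemma vexp_sum_pos: "(\<Sum>x\<in>X. vexp E Cv eta lam i x) > 0"
  using finite_X X_nonempty by (intro sum_pos) (auto simp: vexp_def)

lemma eexp_sum_pos: "e \<in> E \<Longrightarrow> (\<Sum>xe\<in>edge_configs X e. eexp Ce eta lam e xe) > 0"
  using finite_edge_configs edge_configs_nonempty by (intro sum_pos) (auto simp: eexp_def)

lemma mu_v_pos: "mu_v E X Cv eta lam i x > 0"
  unfolding mu_v_def using vexp_sum_pos by (simp add: vexp_def)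

lemma sum_mu_v: "(\<Sum>x\<in>X. mu_v E X Cv eta lam i x) = 1"
  unfolding mu_v_def using vexp_sum_pos[of lam i] by (simp flip: sum_divide_distrib)

lemma mu_e_pos: "e \<in> E \<Longrightarrow> mu_e X Ce eta lam e xe > 0"
  unfolding mu_e_def using eexp_sum_pos by (simp add: eexp_def)

lemma sum_mu_e: "e \<in> E \<Longrightarrow> (\<Sum>xe\<in>edge_configs X e. mu_e X Ce eta lam e xe) = 1"
  unfolding mu_e_def using eexp_sum_pos[of e lam] by (simp flip: sum_divide_distrib)

lemma sum_mu_e_marginal:
  assumes "e \<in> E" "i \<in> e"
  shows "(\<Sum>xe\<in>edge_configs X e. mu_e X Ce eta lam e xe * h (xe i))
       = (\<Sum>x\<in>X. Smarg X Ce eta lam e i x * h x)"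
proof -
  have "(\<Sum>x\<in>X. Smarg X Ce eta lam e i x * h x)
      = (\<Sum>x\<in>X. \<Sum>xe\<in>{xe \<in> edge_configs X e. xe i = x}. mu_e X Ce eta lam e xe * h (xe i))"
    unfolding Smarg_def sum_distrib_right by (intro sum.cong refl) auto
  also have "\<dots> = (\<Sum>xe\<in>edge_configs X e. mu_e X Ce eta lam e xe * h (xe i))"
    using assms finite_edge_configs finite_X edge_config_in_X by (intro sum.group) auto
  finally show ?thesis ..
qed

lemma sum_Smarg: "e \<in> E \<Longrightarrow> i \<in> e \<Longrightarrow> (\<Sum>x\<in>X. Smarg X Ce eta lam e i x) = 1"
  using sum_mu_e_marginal[of e i lam "\<lambda>_. 1"] sum_mu_e[of e lam] by simp

lemma Smarg_pos: "e \<in> E \<Longrightarrow> i \<in> e \<Longrightarrow> x \<in> X \<Longrightarrow> Smarg X Ce eta lam e i x > 0"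
  unfolding Smarg_def using finite_edge_configs edge_configs_fiber_nonempty
  by (intro sum_pos) (auto simp: mu_e_pos)

lemma cost_norm_ge:
  shows "i \<in> V \<Longrightarrow> x \<in> X \<Longrightarrow> \<bar>Cv i x\<bar> \<le> Cn"
    and "e \<in> E \<Longrightarrow> xe \<in> edge_configs X e \<Longrightarrow> \<bar>Ce e xe\<bar> \<le> Cn"
proof -
  have "{\<bar>Cv i x\<bar> | i x. i \<in> V \<and> x \<in> X} = (\<lambda>(i,x). \<bar>Cv i x\<bar>) ` (V \<times> X)"
    "{\<bar>Ce e xe\<bar> | e xe. e \<in> E \<and> xe \<in> edge_configs X e} = (\<lambda>(e,xe). \<bar>Ce e xe\<bar>) ` Sigma E (edge_configs X)"
    by auto
  then have fin: "finite ({\<bar>Cv i x\<bar> | i x. i \<in> V \<and> x \<in> X} \<union>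
      {\<bar>Ce e xe\<bar> | e xe. e \<in> E \<and> xe \<in> edge_configs X e})"
    using finite_V finite_X finite_E finite_edge_configs by simp
  show "i \<in> V \<Longrightarrow> x \<in> X \<Longrightarrow> \<bar>Cv i x\<bar> \<le> Cn"
    unfolding cost_norm_def by (rule Max_ge[OF fin]) blast
  show "e \<in> E \<Longrightarrow> xe \<in> edge_configs X e \<Longrightarrow> \<bar>Ce e xe\<bar> \<le> Cn"
    unfolding cost_norm_def by (rule Max_ge[OF fin]) blast
qed

lemma cost_norm_nonneg:
  assumes "E \<noteq> {}"
  shows "Cn \<ge> 0"
proof -
  obtain e where "e \<in> E"
    using assms by blast
  moreover obtain xe where "xe \<in> edge_configs X e"
    using edge_configs_nonempty[OF \<open>e \<in> E\<close>] by blast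
  ultimately show ?thesis
    using cost_norm_ge(2) abs_ge_zero order.trans by blast
qed

definition grad :: "('v,'x) dual \<Rightarrow> ('v,'x) dual" where
  "grad lam e i x = mu_v E X Cv eta lam i x - Smarg X Ce eta lam e i x"

definition grad_inner :: "('v,'x) dual \<Rightarrow> ('v,'x) dual \<Rightarrow> real" where
  "grad_inner lam h = (\<Sum>(e,i)\<in>P. \<Sum>x\<in>X. grad lam e i x * h e i x)"

lemma grad_inner_split:
  "grad_inner lam h =
     (\<Sum>i\<in>V. \<Sum>x\<in>X. mu_v E X Cv eta lam i x * (\<Sum>e\<in>nbhd E i. h e i x))
   + (\<Sum>e\<in>E. \<Sum>xe\<in>edge_configs X e. mu_e X Ce eta lam e xe * (- (\<Sum>i\<in>e. h e i (xe i))))"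
proof -
  have "(\<Sum>i\<in>V. \<Sum>x\<in>X. mu_v E X Cv eta lam i x * (\<Sum>e\<in>nbhd E i. h e i x))
      = (\<Sum>i\<in>V. \<Sum>e\<in>nbhd E i. \<Sum>x\<in>X. mu_v E X Cv eta lam i x * h e i x)"
    by (simp add: sum_distrib_left, subst sum.swap, simp)
  also have "\<dots> = (\<Sum>(e,i)\<in>P. \<Sum>x\<in>X. mu_v E X Cv eta lam i x * h e i x)"
    by (rule sum_pairs_by_vertices)
  finally have vertices: "(\<Sum>i\<in>V. \<Sum>x\<in>X. mu_v E X Cv eta lam i x * (\<Sum>e\<in>nbhd E i. h e i x))
      = (\<Sum>(e,i)\<in>P. \<Sum>x\<in>X. mu_v E X Cv eta lam i x * h e i x)" .
  have "(\<Sum>e\<in>E. \<Sum>xe\<in>edge_configs X e. mu_e X Ce eta lam e xe * (- (\<Sum>i\<in>e. h e i (xe i))))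
      = - (\<Sum>e\<in>E. \<Sum>i\<in>e. \<Sum>xe\<in>edge_configs X e. mu_e X Ce eta lam e xe * h e i (xe i))"
    by (simp add: sum_distrib_left sum_negf, subst sum.swap, simp)
  also have "\<dots> = - (\<Sum>e\<in>E. \<Sum>i\<in>e. \<Sum>x\<in>X. Smarg X Ce eta lam e i x * h e i x)"
    using sum_mu_e_marginal by (auto intro!: sum.cong)
  also have "\<dots> = - (\<Sum>(e,i)\<in>P. \<Sum>x\<in>X. Smarg X Ce eta lam e i x * h e i x)"
    by (simp add: sum_pairs_by_edges)
  finally have edges: "(\<Sum>e\<in>E. \<Sum>xe\<in>edge_configs X e. mu_e X Ce eta lam e xe * (- (\<Sum>i\<in>e. h e i (xe i))))
      = - (\<Sum>(e,i)\<in>P. \<Sum>x\<in>X. Smarg X Ce eta lam e i x * h e i x)" .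
  show ?thesis
    unfolding vertices edges grad_inner_def grad_def
    by (simp add: left_diff_distrib sum_subtractf split_def)
qed

lemma grad_inner_lincomb:
  "grad_inner lam (\<lambda>e i x. a * h1 e i x + b * h2 e i x) = a * grad_inner lam h1 + b * grad_inner lam h2"
  unfolding grad_inner_def by (simp add: algebra_simps sum.distrib sum_distrib_left split_def)

lemma grad_inner_scale: "grad_inner lam (\<lambda>e i x. a * h e i x) = a * grad_inner lam h"
  unfolding grad_inner_def by (simp add: algebra_simps sum_distrib_left split_def)

lemma vertex_term_linearization:
  "1/eta * ln (\<Sum>x\<in>X. vexp E Cv eta lam i x)
     + (\<Sum>x\<in>X. mu_v E X Cv eta lam i x * (\<Sum>e\<in>nbhd E i. w e i x - lam e i x))
   \<le> 1/eta * ln (\<Sum>x\<in>X. vexp E Cv eta w i x)"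
proof -
  define a where "a lam x = - Cv i x + (\<Sum>e\<in>nbhd E i. lam e i x)" for lam x
  have vexp: "vexp E Cv eta lam i x = exp (eta * a lam x)" for lam x
    unfolding vexp_def a_def by (simp add: algebra_simps)
  have "a w x - a lam x = (\<Sum>e\<in>nbhd E i. w e i x - lam e i x)" for x
    unfolding a_def by (simp add: sum_subtractf)
  then show ?thesis
    using ln_sum_exp_gradient_ineq[OF finite_X X_nonempty eta_pos, of "a lam" "a w"]
    by (simp add: mu_v_def vexp)
qed

lemma edge_term_linearization:
  assumes "e \<in> E"
  shows "1/eta * ln (\<Sum>xe\<in>edge_configs X e. eexp Ce eta lam e xe)
     + (\<Sum>xe\<in>edge_configs X e. mu_e X Ce eta lam e xe * (- (\<Sum>i\<in>e. w e i (xe i) - lam e i (xe i))))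
   \<le> 1/eta * ln (\<Sum>xe\<in>edge_configs X e. eexp Ce eta w e xe)"
proof -
  define a where "a lam xe = - Ce e xe - (\<Sum>i\<in>e. lam e i (xe i))" for lam xe
  have eexp: "eexp Ce eta lam e xe = exp (eta * a lam xe)" for lam xe
    unfolding eexp_def a_def by (simp add: algebra_simps)
  have "a w xe - a lam xe = - (\<Sum>i\<in>e. w e i (xe i) - lam e i (xe i))" for xe
    unfolding a_def by (simp add: sum_subtractf)
  then show ?thesis
    using ln_sum_exp_gradient_ineq[OF finite_edge_configs[OF assms] edge_configs_nonempty[OF assms] eta_pos,
        of "a lam" "a w"]
    by (simp add: mu_e_def eexp)
qed

lemma L_ge_linearization: "L lam + grad_inner lam (\<lambda>e i x. w e i x - lam e i x) \<le> L w"
proof -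
  have "(\<Sum>i\<in>V. 1/eta * ln (\<Sum>x\<in>X. vexp E Cv eta lam i x)
          + (\<Sum>x\<in>X. mu_v E X Cv eta lam i x * (\<Sum>e\<in>nbhd E i. w e i x - lam e i x)))
        \<le> (\<Sum>i\<in>V. 1/eta * ln (\<Sum>x\<in>X. vexp E Cv eta w i x))"
    by (intro sum_mono vertex_term_linearization)
  moreover have "(\<Sum>e\<in>E. 1/eta * ln (\<Sum>xe\<in>edge_configs X e. eexp Ce eta lam e xe)
          + (\<Sum>xe\<in>edge_configs X e. mu_e X Ce eta lam e xe * (- (\<Sum>i\<in>e. w e i (xe i) - lam e i (xe i)))))
        \<le> (\<Sum>e\<in>E. 1/eta * ln (\<Sum>xe\<in>edge_configs X e. eexp Ce eta w e xe))"
    by (intro sum_mono edge_term_linearization)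
  ultimately show ?thesis
    unfolding Lfun_def grad_inner_split sum.distrib sum_distrib_left by linarith
qed

lemma L_shift_invariant: "L (\<lambda>e i x. lam e i x - c e i) = L lam"
proof -
  have vertex: "1/eta * ln (\<Sum>x\<in>X. vexp E Cv eta (\<lambda>e i x. lam e i x - c e i) i x)
      = 1/eta * ln (\<Sum>x\<in>X. vexp E Cv eta lam i x) - (\<Sum>e\<in>nbhd E i. c e i)" for i
  proof -
    have "(\<Sum>x\<in>X. vexp E Cv eta (\<lambda>e i x. lam e i x - c e i) i x)
        = (\<Sum>x\<in>X. vexp E Cv eta lam i x) * exp (- eta * (\<Sum>e\<in>nbhd E i. c e i))"
      unfolding vexp_def sum_distrib_right
      by (intro sum.cong refl) (simp add: sum_subtractf algebra_simps flip: exp_add)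
    then show ?thesis
      using vexp_sum_pos[of lam i] eta_pos by (simp add: ln_mult field_simps)
  qed
  have edge: "1/eta * ln (\<Sum>xe\<in>edge_configs X e. eexp Ce eta (\<lambda>e i x. lam e i x - c e i) e xe)
      = 1/eta * ln (\<Sum>xe\<in>edge_configs X e. eexp Ce eta lam e xe) + (\<Sum>i\<in>e. c e i)" if "e \<in> E" for e
  proof -
    have "(\<Sum>xe\<in>edge_configs X e. eexp Ce eta (\<lambda>e i x. lam e i x - c e i) e xe)
        = (\<Sum>xe\<in>edge_configs X e. eexp Ce eta lam e xe) * exp (eta * (\<Sum>i\<in>e. c e i))"
      unfolding eexp_def sum_distrib_right
      by (intro sum.cong refl) (simp add: sum_subtractf algebra_simps flip: exp_add)
    then show ?thesis
      using eexp_sum_pos[OF that, of lam] eta_pos by (simp add: ln_mult field_simps)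
  qed
  have "L (\<lambda>e i x. lam e i x - c e i) =
      (\<Sum>i\<in>V. 1/eta * ln (\<Sum>x\<in>X. vexp E Cv eta lam i x) - (\<Sum>e\<in>nbhd E i. c e i))
    + (\<Sum>e\<in>E. 1/eta * ln (\<Sum>xe\<in>edge_configs X e. eexp Ce eta lam e xe) + (\<Sum>i\<in>e. c e i))"
    unfolding Lfun_def sum_distrib_left using vertex edge by simp
  then show ?thesis
    unfolding Lfun_def sum_distrib_left sum.distrib sum_subtractf sum_pairs_by_edges sum_pairs_by_vertices
    by simp
qed

definition center_blocks :: "('v,'x) dual \<Rightarrow> ('v,'x) dual" where
  "center_blocks w e i x = w e i x - (\<Sum>y\<in>X. w e i y) / real (card X)"

lemma L_center_blocks: "L (center_blocks w) = L w"
  unfolding center_blocks_def by (rule L_shift_invariant)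

lemma sum_center_blocks: "(\<Sum>x\<in>X. center_blocks w e i x) = 0"
  using card_X by (simp add: center_blocks_def sum_subtractf)

lemma L_zero_le:
  "L (\<lambda>_ _ _. 0) \<le> real (card V) * (Cn + ln (card X) / eta) + real (card E) * (Cn + 2 * ln (card X) / eta)"
proof -
  have vertex: "1/eta * ln (\<Sum>x\<in>X. vexp E Cv eta (\<lambda>_ _ _. 0) i x) \<le> Cn + ln (card X) / eta"
    if "i \<in> V" for i
  proof -
    have "eta * (- Cv i x) \<le> eta * Cn" if "x \<in> X" for x
      using cost_norm_ge(1)[OF \<open>i \<in> V\<close> that] eta_pos by (intro mult_left_mono) auto
    then have "(\<Sum>x\<in>X. vexp E Cv eta (\<lambda>_ _ _. 0) i x) \<le> (\<Sum>x\<in>X. exp (eta * Cn))"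
      by (intro sum_mono) (simp add: vexp_def)
    then have "ln (\<Sum>x\<in>X. vexp E Cv eta (\<lambda>_ _ _. 0) i x) \<le> ln (card X) + eta * Cn"
      using vexp_sum_pos card_X by (subst (asm) ln_le_cancel_iff[symmetric]) (auto simp: ln_mult)
    then show ?thesis
      using eta_pos by (simp add: field_simps)
  qed
  have edge: "1/eta * ln (\<Sum>xe\<in>edge_configs X e. eexp Ce eta (\<lambda>_ _ _. 0) e xe) \<le> Cn + 2 * ln (card X) / eta"
    if "e \<in> E" for e
  proof -
    have "eta * (- Ce e xe) \<le> eta * Cn" if "xe \<in> edge_configs X e" for xe
      using cost_norm_ge(2)[OF \<open>e \<in> E\<close> that] eta_pos by (intro mult_left_mono) auto
    then have "(\<Sum>xe\<in>edge_configs X e. eexp Ce eta (\<lambda>_ _ _. 0) e xe) \<le> (\<Sum>xe\<in>edge_configs X e. exp (eta * Cn))"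
      by (intro sum_mono) (simp add: eexp_def)
    then have "ln (\<Sum>xe\<in>edge_configs X e. eexp Ce eta (\<lambda>_ _ _. 0) e xe) \<le> 2 * ln (card X) + eta * Cn"
      using eexp_sum_pos[OF that] card_X card_edge_configs[OF that]
      by (subst (asm) ln_le_cancel_iff[symmetric]) (auto simp: ln_mult ln_realpow)
    then show ?thesis
      using eta_pos by (simp add: field_simps)
  qed
  have "L (\<lambda>_ _ _. 0) \<le> (\<Sum>i\<in>V. Cn + ln (card X) / eta) + (\<Sum>e\<in>E. Cn + 2 * ln (card X) / eta)"
    unfolding Lfun_def sum_distrib_left using vertex edge by (intro add_mono sum_mono) auto
  then show ?thesis
    by simp
qed

lemma vertex_term_lower:
  assumes "i \<in> V" and centered: "\<And>e. e \<in> nbhd E i \<Longrightarrow> (\<Sum>x\<in>X. u e i x) = 0"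
  shows "- Cn \<le> 1/eta * ln (\<Sum>x\<in>X. vexp E Cv eta u i x)"
proof -
  define d where "d = real (card X)"
  define a where "a x = eta * (- Cv i x) + eta * (\<Sum>e\<in>nbhd E i. u e i x)" for x
  have d: "d > 0"
    using card_X by (simp add: d_def)
  have "(\<Sum>x\<in>X. eta * (\<Sum>e\<in>nbhd E i. u e i x)) = eta * (\<Sum>e\<in>nbhd E i. \<Sum>x\<in>X. u e i x)"
    by (simp add: sum_distrib_left sum.swap[of _ X])
  also have "\<dots> = 0"
    using centered by simp
  finally have "(\<Sum>x\<in>X. a x) = (\<Sum>x\<in>X. eta * (- Cv i x))"
    by (simp only: a_def sum.distrib)
  also have "\<dots> \<ge> (\<Sum>x\<in>X. eta * (- Cn))"
    using cost_norm_ge(1)[OF \<open>i \<in> V\<close>] eta_pos by (intro sum_mono mult_left_mono) (auto simp: abs_le_iff)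
  finally have "- eta * Cn \<le> (\<Sum>x\<in>X. 1/d * a x)"
    unfolding sum_distrib_left[symmetric] using d by (simp add: d_def field_simps)
  also have "\<dots> \<le> ln (\<Sum>x\<in>X. exp (a x))"
    using d finite_X X_nonempty by (intro expectation_le_ln_sum_exp) (auto simp: d_def)
  finally show ?thesis
    using eta_pos by (simp add: vexp_def a_def field_simps)
qed

text \<open>Testing the log-sum-exp of an edge against this distribution, tilted against u,
  shows that the edge term grows quadratically in u.\<close>

lemma edge_test_distribution:
  assumes "e \<in> E" and centered: "\<And>i. i \<in> e \<Longrightarrow> (\<Sum>x\<in>X. u e i x) = 0"
    and "M > 0" and bounded: "\<And>i x. i \<in> e \<Longrightarrow> x \<in> X \<Longrightarrow> \<bar>u e i x\<bar> \<le> M"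
  defines "p \<equiv> \<lambda>xe. \<Prod>j\<in>e. (1 - u e j (xe j) / (2 * M)) / real (card X)"
  shows "\<And>xe. xe \<in> edge_configs X e \<Longrightarrow> p xe \<ge> 0"
    and "(\<Sum>xe\<in>edge_configs X e. p xe) = 1"
    and "(\<Sum>xe\<in>edge_configs X e. p xe * (\<Sum>i\<in>e. u e i (xe i)))
           = - (\<Sum>i\<in>e. \<Sum>x\<in>X. (u e i x)^2) / (2 * real (card X) * M)"
proof -
  define d where "d = real (card X)"
  define q where "q j x = (1 - u e j x / (2 * M)) / d" for j x
  have p: "p xe = (\<Prod>j\<in>e. q j (xe j))" for xe
    by (simp add: p_def q_def d_def)
  have d: "d > 0"
    using card_X by (simp add: d_def)
  have q_nonneg: "q j x \<ge> 0" if "j \<in> e" "x \<in> X" for j x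
    using bounded[OF that] \<open>M > 0\<close> d by (auto simp: q_def abs_le_iff field_simps)
  have sum_q: "(\<Sum>x\<in>X. q j x) = 1" if "j \<in> e" for j
    using centered[OF that] d \<open>M > 0\<close>
    by (simp add: q_def d_def diff_divide_distrib sum_subtractf flip: sum_divide_distrib)
  have marginal: "(\<Sum>xe\<in>edge_configs X e. p xe * f (xe j)) = (\<Sum>x\<in>X. q j x * f x)" if "j \<in> e" for f j
    unfolding p edge_configs_def
    using finite_edge[OF \<open>e \<in> E\<close>] finite_X that sum_q by (rule sum_PiE_prod_marginal)
  show "p xe \<ge> 0" if "xe \<in> edge_configs X e" for xe
    unfolding p using q_nonneg edge_config_in_X[OF that] by (intro prod_nonneg) auto
  show "(\<Sum>xe\<in>edge_configs X e. p xe) = 1"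
    using marginal[of _ "\<lambda>_. 1"] sum_q edge_nonempty[OF \<open>e \<in> E\<close>] by fastforce
  have "(\<Sum>xe\<in>edge_configs X e. p xe * u e i (xe i)) = - (\<Sum>x\<in>X. (u e i x)^2) / (2 * d * M)"
    if "i \<in> e" for i
  proof -
    have "(\<Sum>xe\<in>edge_configs X e. p xe * u e i (xe i)) = (\<Sum>x\<in>X. q i x * u e i x)"
      by (rule marginal[OF that])
    also have "\<dots> = 1/d * (\<Sum>x\<in>X. u e i x) - (\<Sum>x\<in>X. (u e i x)^2) / (2 * d * M)"
      unfolding q_def sum_distrib_left sum_divide_distrib sum_subtractf[symmetric]
      using d \<open>M > 0\<close> by (intro sum.cong refl) (simp add: field_simps power2_eq_square)
    finally show ?thesis
      using centered[OF that] by simp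
  qed
  then have "(\<Sum>i\<in>e. \<Sum>xe\<in>edge_configs X e. p xe * u e i (xe i))
      = (\<Sum>i\<in>e. - (\<Sum>x\<in>X. (u e i x)^2) / (2 * d * M))"
    by (rule sum.cong[OF refl])
  then show "(\<Sum>xe\<in>edge_configs X e. p xe * (\<Sum>i\<in>e. u e i (xe i)))
      = - (\<Sum>i\<in>e. \<Sum>x\<in>X. (u e i x)^2) / (2 * real (card X) * M)"
    unfolding sum_distrib_left d_def by (subst sum.swap) (simp add: sum_divide_distrib sum_negf)
qed

lemma edge_term_lower:
  assumes "e \<in> E" and centered: "\<And>i. i \<in> e \<Longrightarrow> (\<Sum>x\<in>X. u e i x) = 0"
    and "M > 0" and bounded: "\<And>i x. i \<in> e \<Longrightarrow> x \<in> X \<Longrightarrow> \<bar>u e i x\<bar> \<le> M"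
  shows "- Cn + (\<Sum>i\<in>e. \<Sum>x\<in>X. (u e i x)^2) / (2 * real (card X) * M)
           \<le> 1/eta * ln (\<Sum>xe\<in>edge_configs X e. eexp Ce eta u e xe)"
proof -
  define p where "p xe = (\<Prod>j\<in>e. (1 - u e j (xe j) / (2 * M)) / real (card X))" for xe
  define a where "a xe = eta * (- Ce e xe) - eta * (\<Sum>i\<in>e. u e i (xe i))" for xe
  note p = edge_test_distribution[where e=e and u=u and M=M, OF assms, folded p_def]
  have "- Cn = (\<Sum>xe\<in>edge_configs X e. p xe * (- Cn))"
    using p(2) by (simp add: sum_negf flip: sum_distrib_right)
  also have "\<dots> \<le> (\<Sum>xe\<in>edge_configs X e. p xe * (- Ce e xe))"
    using cost_norm_ge(2)[OF \<open>e \<in> E\<close>] p(1) by (intro sum_mono mult_left_mono) (auto simp: abs_le_iff)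
  finally have cost: "- Cn \<le> (\<Sum>xe\<in>edge_configs X e. p xe * (- Ce e xe))" .
  have "(\<Sum>xe\<in>edge_configs X e. p xe * a xe)
      = eta * (\<Sum>xe\<in>edge_configs X e. p xe * (- Ce e xe))
        - eta * (\<Sum>xe\<in>edge_configs X e. p xe * (\<Sum>i\<in>e. u e i (xe i)))"
    unfolding a_def by (simp add: algebra_simps sum_subtractf sum_distrib_left)
  also have "\<dots> = eta * (\<Sum>xe\<in>edge_configs X e. p xe * (- Ce e xe))
        + eta * ((\<Sum>i\<in>e. \<Sum>x\<in>X. (u e i x)^2) / (2 * real (card X) * M))"
    by (simp add: p(3))
  finally have "eta * (- Cn + (\<Sum>i\<in>e. \<Sum>x\<in>X. (u e i x)^2) / (2 * real (card X) * M))
      \<le> (\<Sum>xe\<in>edge_configs X e. p xe * a xe)"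
    using mult_left_mono[OF cost, of eta] eta_pos by (simp add: algebra_simps)
  also have "\<dots> \<le> ln (\<Sum>xe\<in>edge_configs X e. exp (a xe))"
    using finite_edge_configs edge_configs_nonempty \<open>e \<in> E\<close> p(1,2)
    by (intro expectation_le_ln_sum_exp) auto
  finally show ?thesis
    using eta_pos by (simp add: eexp_def a_def field_simps)
qed

definition sq_norm :: "('v,'x) dual \<Rightarrow> real" where
  "sq_norm u = (\<Sum>(e,i)\<in>P. \<Sum>x\<in>X. (u e i x)^2)"

lemma sq_norm_nonneg: "sq_norm u \<ge> 0"
  unfolding sq_norm_def by (intro sum_nonneg) (auto intro: sum_nonneg)

lemma abs_le_sqrt_sq_norm:
  assumes "(e, i) \<in> P" "x \<in> X"
  shows "\<bar>u e i x\<bar> \<le> sqrt (sq_norm u)"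
proof -
  have "(u e i x)^2 \<le> (\<Sum>y\<in>X. (u e i y)^2)"
    using assms finite_X by (intro member_le_sum) auto
  also have "\<dots> \<le> sq_norm u"
    unfolding sq_norm_def using assms finite_pairs
    by (auto intro!: member_le_sum[where f="\<lambda>(e,i). \<Sum>x\<in>X. (u e i x)^2" and i="(e,i)", simplified] sum_nonneg)
  finally show ?thesis
    by (metis real_sqrt_abs real_sqrt_le_mono)
qed

lemma L_lower_bound:
  assumes centered: "\<And>e i. (e, i) \<in> P \<Longrightarrow> (\<Sum>x\<in>X. u e i x) = 0"
    and "M > 0" and bounded: "\<And>e i x. (e, i) \<in> P \<Longrightarrow> x \<in> X \<Longrightarrow> \<bar>u e i x\<bar> \<le> M"
  shows "- (real (card V) + real (card E)) * Cn + sq_norm u / (2 * real (card X) * M) \<le> L u"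
proof -
  have "(\<Sum>i\<in>V. - Cn) + (\<Sum>e\<in>E. - Cn + (\<Sum>i\<in>e. \<Sum>x\<in>X. (u e i x)^2) / (2 * real (card X) * M)) \<le> L u"
    unfolding Lfun_def sum_distrib_left
  proof (intro add_mono sum_mono)
    show "- Cn \<le> 1/eta * ln (\<Sum>x\<in>X. vexp E Cv eta u i x)" if "i \<in> V" for i
      using that centered by (intro vertex_term_lower) (auto simp: nbhd_def pairs_def)
    show "- Cn + (\<Sum>i\<in>e. \<Sum>x\<in>X. (u e i x)^2) / (2 * real (card X) * M)
        \<le> 1/eta * ln (\<Sum>xe\<in>edge_configs X e. eexp Ce eta u e xe)" if "e \<in> E" for e
      using that centered bounded \<open>M > 0\<close> by (intro edge_term_lower) (auto simp: pairs_def)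
  qed
  moreover have "(\<Sum>e\<in>E. - Cn + (\<Sum>i\<in>e. \<Sum>x\<in>X. (u e i x)^2) / (2 * real (card X) * M))
      = - real (card E) * Cn + sq_norm u / (2 * real (card X) * M)"
    unfolding sq_norm_def sum.distrib sum_pairs_by_edges[symmetric] sum_divide_distrib by simp
  ultimately show ?thesis
    by (simp add: algebra_simps)
qed

lemma L_coercive:
  assumes centered: "\<And>e i. (e, i) \<in> P \<Longrightarrow> (\<Sum>x\<in>X. u e i x) = 0"
  shows "sqrt (sq_norm u) \<le> 2 * real (card X) * (L u + (real (card V) + real (card E)) * Cn)"
proof (cases "sq_norm u = 0")
  case True
  have "- (real (card V) + real (card E)) * Cn + sq_norm u / (2 * real (card X) * 1) \<le> L u"
    using abs_le_sqrt_sq_norm[of _ _ _ u] True by (intro L_lower_bound[OF centered]) auto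
  then have "0 \<le> L u + (real (card V) + real (card E)) * Cn"
    using True by (simp add: algebra_simps)
  then show ?thesis
    using True by simp
next
  case False
  then have s: "sqrt (sq_norm u) > 0"
    using sq_norm_nonneg[of u] by simp
  have lower: "- (real (card V) + real (card E)) * Cn + sq_norm u / (2 * real (card X) * sqrt (sq_norm u)) \<le> L u"
    using abs_le_sqrt_sq_norm s by (intro L_lower_bound[OF centered]) auto
  have "sq_norm u = sqrt (sq_norm u) * sqrt (sq_norm u)"
    using sq_norm_nonneg[of u] by simp
  then have "sq_norm u / (2 * real (card X) * sqrt (sq_norm u)) = sqrt (sq_norm u) / (2 * real (card X))"
    using s by (metis mult.commute nonzero_mult_divide_mult_cancel_left2 order_less_irrefl)
  with lower have "sqrt (sq_norm u) / (2 * real (card X)) \<le> L u + (real (card V) + real (card E)) * Cn"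
    by (simp only: mult_minus_left)
  then show ?thesis
    using card_X by (simp add: field_simps)
qed

lemma L_ge: "- (real (card V) + real (card E)) * Cn \<le> L w"
proof -
  have "sqrt (sq_norm (center_blocks w))
      \<le> 2 * real (card X) * (L (center_blocks w) + (real (card V) + real (card E)) * Cn)"
    by (rule L_coercive) (rule sum_center_blocks)
  then have "0 \<le> 2 * real (card X) * (L (center_blocks w) + (real (card V) + real (card E)) * Cn)"
    using real_sqrt_ge_zero[OF sq_norm_nonneg] by (rule order.trans[rotated])
  then have "0 \<le> L w + (real (card V) + real (card E)) * Cn"
    using card_X by (simp add: L_center_blocks zero_le_mult_iff)
  then show ?thesis
    by (simp add: algebra_simps)
qed

section \<open>Block updates\<close>

definition block_update :: "('v,'x) dual \<Rightarrow> 'v set \<Rightarrow> 'v \<Rightarrow> ('v,'x) dual" where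
  "block_update y e0 i0 = (\<lambda>e i x. if e = e0 \<and> i = i0
     then y e i x + 1 / (2 * eta) * ln (Smarg X Ce eta y e i x / mu_v E X Cv eta y i x)
     else y e i x)"

definition bhattacharyya :: "('v,'x) dual \<Rightarrow> 'v set \<Rightarrow> 'v \<Rightarrow> real" where
  "bhattacharyya y e i = (\<Sum>x\<in>X. sqrt (mu_v E X Cv eta y i x * Smarg X Ce eta y e i x))"

lemma bhattacharyya_pos: "(e, i) \<in> P \<Longrightarrow> bhattacharyya y e i > 0"
  unfolding bhattacharyya_def pairs_def using finite_X X_nonempty
  by (intro sum_pos) (auto intro!: mult_pos_pos mu_v_pos Smarg_pos)

context
  fixes y :: "('v,'x) dual" and e0 :: "'v set" and i0 :: 'v
  assumes block: "(e0, i0) \<in> P"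
begin

definition update_factor :: "'x \<Rightarrow> real" where
  "update_factor x = sqrt (Smarg X Ce eta y e0 i0 x / mu_v E X Cv eta y i0 x)"

lemma exp_block_update:
  assumes "x \<in> X"
  shows "exp (eta * (block_update y e0 i0 e0 i0 x - y e0 i0 x)) = update_factor x"
proof -
  have "Smarg X Ce eta y e0 i0 x / mu_v E X Cv eta y i0 x > 0"
    using block assms mu_v_pos Smarg_pos by (auto simp: pairs_def)
  then show ?thesis
    using eta_pos by (simp add: block_update_def update_factor_def exp_ln ln_sqrt[symmetric])
qed

lemma sum_nbhd_block_update:
  "(\<Sum>e\<in>nbhd E i. block_update y e0 i0 e i x)
     = (\<Sum>e\<in>nbhd E i. y e i x) + (if i = i0 then block_update y e0 i0 e0 i0 x - y e0 i0 x else 0)"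
proof -
  have "finite (nbhd E i)" "i = i0 \<Longrightarrow> e0 \<in> nbhd E i"
    using finite_E block by (auto simp: nbhd_def pairs_def)
  moreover have "(\<Sum>e\<in>nbhd E i. block_update y e0 i0 e i x)
      = (\<Sum>e\<in>nbhd E i. y e i x + (if e = e0 \<and> i = i0 then block_update y e0 i0 e0 i0 x - y e0 i0 x else 0))"
    by (intro sum.cong refl) (simp add: block_update_def)
  ultimately show ?thesis
    by (cases "i = i0") (simp_all add: sum.distrib)
qed

lemma sum_edge_block_update:
  assumes "e \<in> E"
  shows "(\<Sum>i\<in>e. block_update y e0 i0 e i (xe i))
     = (\<Sum>i\<in>e. y e i (xe i)) + (if e = e0 then block_update y e0 i0 e0 i0 (xe i0) - y e0 i0 (xe i0) else 0)"
proof -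
  have "finite e" "e = e0 \<Longrightarrow> i0 \<in> e"
    using assms finite_edge block by (auto simp: pairs_def)
  moreover have "(\<Sum>i\<in>e. block_update y e0 i0 e i (xe i))
      = (\<Sum>i\<in>e. y e i (xe i) + (if e = e0 \<and> i = i0 then block_update y e0 i0 e0 i0 (xe i) - y e0 i0 (xe i) else 0))"
    by (intro sum.cong refl) (simp add: block_update_def)
  ultimately show ?thesis
    by (cases "e = e0") (simp_all add: sum.distrib)
qed

lemma vexp_sum_block_update:
  "(\<Sum>x\<in>X. vexp E Cv eta (block_update y e0 i0) i x)
     = (\<Sum>x\<in>X. vexp E Cv eta y i x) * (if i = i0 then bhattacharyya y e0 i0 else 1)"
proof (cases "i = i0")
  case True
  have "(\<Sum>x\<in>X. vexp E Cv eta (block_update y e0 i0) i x) = (\<Sum>x\<in>X. vexp E Cv eta y i0 x * update_factor x)"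
  proof (intro sum.cong refl)
    fix x assume "x \<in> X"
    have "vexp E Cv eta (block_update y e0 i0) i0 x
        = vexp E Cv eta y i0 x * exp (eta * (block_update y e0 i0 e0 i0 x - y e0 i0 x))"
      by (simp add: vexp_def sum_nbhd_block_update algebra_simps flip: exp_add)
    then show "vexp E Cv eta (block_update y e0 i0) i x = vexp E Cv eta y i0 x * update_factor x"
      using True exp_block_update[OF \<open>x \<in> X\<close>] by simp
  qed
  also have "\<dots> = (\<Sum>x\<in>X. vexp E Cv eta y i0 x) * (\<Sum>x\<in>X. mu_v E X Cv eta y i0 x * update_factor x)"
    using vexp_sum_pos[of y i0] by (simp add: mu_v_def sum_distrib_left)
  also have "(\<Sum>x\<in>X. mu_v E X Cv eta y i0 x * update_factor x) = bhattacharyya y e0 i0"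
    unfolding bhattacharyya_def update_factor_def using block
    by (intro sum.cong refl sqrt_geometric_mean(1)) (auto simp: mu_v_pos Smarg_pos pairs_def)
  finally show ?thesis
    using True by simp
qed (simp add: vexp_def sum_nbhd_block_update)

lemma eexp_sum_block_update:
  assumes "e \<in> E"
  shows "(\<Sum>xe\<in>edge_configs X e. eexp Ce eta (block_update y e0 i0) e xe)
     = (\<Sum>xe\<in>edge_configs X e. eexp Ce eta y e xe) * (if e = e0 then bhattacharyya y e0 i0 else 1)"
proof (cases "e = e0")
  case True
  have i0: "i0 \<in> e0"
    using block by (simp add: pairs_def)
  have "(\<Sum>xe\<in>edge_configs X e. eexp Ce eta (block_update y e0 i0) e xe)
      = (\<Sum>xe\<in>edge_configs X e0. eexp Ce eta y e0 xe * (1 / update_factor (xe i0)))"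
    unfolding True
  proof (intro sum.cong refl)
    fix xe assume xe: "xe \<in> edge_configs X e0"
    have "eexp Ce eta (block_update y e0 i0) e0 xe
        = eexp Ce eta y e0 xe / exp (eta * (block_update y e0 i0 e0 i0 (xe i0) - y e0 i0 (xe i0)))"
      using True assms by (simp add: eexp_def sum_edge_block_update algebra_simps flip: exp_diff)
    then show "eexp Ce eta (block_update y e0 i0) e0 xe = eexp Ce eta y e0 xe * (1 / update_factor (xe i0))"
      using True exp_block_update[OF edge_config_in_X[OF xe i0]] by simp
  qed
  also have "\<dots> = (\<Sum>xe\<in>edge_configs X e0. eexp Ce eta y e0 xe)
      * (\<Sum>xe\<in>edge_configs X e0. mu_e X Ce eta y e0 xe * (1 / update_factor (xe i0)))"
    using eexp_sum_pos[of e0 y] True assms by (simp add: mu_e_def sum_distrib_left)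
  also have "(\<Sum>xe\<in>edge_configs X e0. mu_e X Ce eta y e0 xe * (1 / update_factor (xe i0)))
      = (\<Sum>x\<in>X. Smarg X Ce eta y e0 i0 x / update_factor x)"
    using sum_mu_e_marginal[OF _ i0, of y "\<lambda>x. 1 / update_factor x"] True assms by simp
  also have "\<dots> = bhattacharyya y e0 i0"
    unfolding bhattacharyya_def update_factor_def using block
    by (intro sum.cong refl sqrt_geometric_mean(2)) (auto simp: mu_v_pos Smarg_pos pairs_def)
  finally show ?thesis
    using True by simp
qed (simp add: eexp_def sum_edge_block_update assms)

lemma L_block_update: "L (block_update y e0 i0) = L y + 2 / eta * ln (bhattacharyya y e0 i0)"
proof -
  have B: "bhattacharyya y e0 i0 > 0"
    using block by (rule bhattacharyya_pos)
  have "e0 \<in> E" "i0 \<in> V"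
    using block edge_subset by (auto simp: pairs_def)
  have "ln (\<Sum>x\<in>X. vexp E Cv eta (block_update y e0 i0) i x)
      = ln (\<Sum>x\<in>X. vexp E Cv eta y i x) + (if i = i0 then ln (bhattacharyya y e0 i0) else 0)" for i
    using vexp_sum_pos[of y i] B by (cases "i = i0") (simp_all add: vexp_sum_block_update ln_mult)
  moreover have "ln (\<Sum>xe\<in>edge_configs X e. eexp Ce eta (block_update y e0 i0) e xe)
      = ln (\<Sum>xe\<in>edge_configs X e. eexp Ce eta y e xe) + (if e = e0 then ln (bhattacharyya y e0 i0) else 0)"
    if "e \<in> E" for e
    using eexp_sum_pos[OF that, of y] B that by (cases "e = e0") (simp_all add: eexp_sum_block_update ln_mult)
  ultimately show ?thesis
    using \<open>e0 \<in> E\<close> \<open>i0 \<in> V\<close> finite_V finite_E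
    by (simp add: Lfun_def sum.distrib algebra_simps cong: sum.cong)
qed

end

lemma L_block_update_descent:
  assumes "(e0, i0) \<in> P"
  shows "L (block_update y e0 i0) \<le> L y - 1/(4*eta) * (\<Sum>x\<in>X. (grad y e0 i0 x)^2)"
proof -
  define B where "B = bhattacharyya y e0 i0"
  have "e0 \<in> E" "i0 \<in> e0"
    using assms by (auto simp: pairs_def)
  have "(\<Sum>x\<in>X. (grad y e0 i0 x)^2) \<le> 8 * (1 - B)"
    unfolding grad_def B_def bhattacharyya_def using \<open>e0 \<in> E\<close> \<open>i0 \<in> e0\<close>
    by (intro sum_sq_diff_le_hellinger finite_X) (auto simp: sum_mu_v sum_Smarg intro: less_imp_le mu_v_pos Smarg_pos)
  moreover have "ln B \<le> B - 1"
    using bhattacharyya_pos[OF assms] by (simp add: B_def ln_le_minus_one)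
  ultimately have "2 / eta * ln B \<le> - 1/(4*eta) * (\<Sum>x\<in>X. (grad y e0 i0 x)^2)"
    using eta_pos by (simp add: field_simps)
  then show ?thesis
    using L_block_update[OF assms] by (simp add: B_def)
qed

section \<open>The potential function\<close>

lemma sq_norm_update_block:
  assumes "(e0, i0) \<in> P"
  shows "sq_norm (\<lambda>e i x. (if e = e0 \<and> i = i0 then v e i x - a * g e i x else v e i x) - u e i x)
       = sq_norm (\<lambda>e i x. v e i x - u e i x)
         - 2 * a * (\<Sum>x\<in>X. g e0 i0 x * (v e0 i0 x - u e0 i0 x)) + a^2 * (\<Sum>x\<in>X. (g e0 i0 x)^2)"
proof -
  have "(\<Sum>x\<in>X. (v e0 i0 x - a * g e0 i0 x - u e0 i0 x)^2)
      = (\<Sum>x\<in>X. (v e0 i0 x - u e0 i0 x)^2 - 2 * a * (g e0 i0 x * (v e0 i0 x - u e0 i0 x)) + a^2 * (g e0 i0 x)^2)"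
    by (intro sum.cong refl) (simp add: power2_eq_square algebra_simps)
  also have "\<dots> = (\<Sum>x\<in>X. (v e0 i0 x - u e0 i0 x)^2)
      - 2 * a * (\<Sum>x\<in>X. g e0 i0 x * (v e0 i0 x - u e0 i0 x)) + a^2 * (\<Sum>x\<in>X. (g e0 i0 x)^2)"
    by (simp add: sum.distrib sum_subtractf sum_distrib_left)
  moreover have "(\<Sum>(e,i)\<in>P - {(e0, i0)}. \<Sum>x\<in>X. ((if e = e0 \<and> i = i0 then v e i x - a * g e i x else v e i x) - u e i x)^2)
      = (\<Sum>(e,i)\<in>P - {(e0, i0)}. \<Sum>x\<in>X. (v e i x - u e i x)^2)"
  proof (rule sum.cong[OF refl])
    fix p assume "p \<in> P - {(e0, i0)}"
    then show "(case p of (e, i) \<Rightarrow> \<Sum>x\<in>X. ((if e = e0 \<and> i = i0 then v e i x - a * g e i x else v e i x) - u e i x)^2)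
        = (case p of (e, i) \<Rightarrow> \<Sum>x\<in>X. (v e i x - u e i x)^2)"
      by (cases p) (clarsimp cong: conj_cong)
  qed
  ultimately show ?thesis
    unfolding sq_norm_def sum.remove[OF finite_pairs assms] by simp
qed

lemma accel_step_eq:
  fixes k :: nat and lam v :: "('v,'x) dual"
  defines "th \<equiv> theta_seq (Suc k)"
  defines "Y \<equiv> \<lambda>e i x. th * v e i x + (1 - th) * lam e i x"
  shows "accel_step E X Cv Ce eta k (lam, v) (e0, i0) =
     (block_update Y e0 i0,
      \<lambda>e i x. if e = e0 \<and> i = i0 then v e i x - 1 / (4 * real (card E) * eta * th) * grad Y e i x else v e i x)"
  unfolding accel_step_def Let_def block_update_def grad_def Y_def th_def
  by (simp add: fun_eq_iff algebra_simps del: theta_seq.simps)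

lemma sum_L_block_update_le:
  "(\<Sum>(e,i)\<in>P. L (block_update y e i))
     \<le> real (card P) * L y - 1/(4*eta) * (\<Sum>(e,i)\<in>P. \<Sum>x\<in>X. (grad y e i x)^2)"
proof -
  have "(\<Sum>(e,i)\<in>P. L (block_update y e i)) \<le> (\<Sum>(e,i)\<in>P. L y - 1/(4*eta) * (\<Sum>x\<in>X. (grad y e i x)^2))"
    using L_block_update_descent by (intro sum_mono) auto
  then show ?thesis
    by (simp add: sum_subtractf sum_distrib_left split_def)
qed

lemma sum_sq_norm_update_blocks:
  "(\<Sum>(e0,i0)\<in>P. sq_norm (\<lambda>e i x. (if e = e0 \<and> i = i0 then v e i x - a * grad y e i x else v e i x) - u e i x))
     = real (card P) * sq_norm (\<lambda>e i x. v e i x - u e i x)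
       - 2 * a * grad_inner y (\<lambda>e i x. v e i x - u e i x) + a^2 * (\<Sum>(e,i)\<in>P. \<Sum>x\<in>X. (grad y e i x)^2)"
proof -
  have "(\<Sum>(e0,i0)\<in>P. sq_norm (\<lambda>e i x. (if e = e0 \<and> i = i0 then v e i x - a * grad y e i x else v e i x) - u e i x))
      = (\<Sum>(e0,i0)\<in>P. sq_norm (\<lambda>e i x. v e i x - u e i x)
          - 2 * a * (\<Sum>x\<in>X. grad y e0 i0 x * (v e0 i0 x - u e0 i0 x)) + a^2 * (\<Sum>x\<in>X. (grad y e0 i0 x)^2))"
    by (intro sum.cong refl) (auto simp: sq_norm_update_block)
  then show ?thesis
    by (simp add: grad_inner_def sum.distrib sum_subtractf sum_distrib_left split_def)
qed

lemma grad_inner_momentum: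
  fixes th :: real and lam v u :: "('v,'x) dual"
  defines "y \<equiv> \<lambda>e i x. th * v e i x + (1 - th) * lam e i x"
  shows "th * grad_inner y (\<lambda>e i x. v e i x - u e i x)
     = - th * grad_inner y (\<lambda>e i x. u e i x - y e i x) - (1 - th) * grad_inner y (\<lambda>e i x. lam e i x - y e i x)"
proof -
  have "(\<lambda>e i x. th * (v e i x - u e i x))
      = (\<lambda>e i x. (- th) * (u e i x - y e i x) + (- (1 - th)) * (lam e i x - y e i x))"
    by (simp add: y_def fun_eq_iff algebra_simps)
  then have "grad_inner y (\<lambda>e i x. th * (v e i x - u e i x))
      = - th * grad_inner y (\<lambda>e i x. u e i x - y e i x) - (1 - th) * grad_inner y (\<lambda>e i x. lam e i x - y e i x)"
    by (simp only: grad_inner_lincomb)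
  then show ?thesis
    by (simp only: grad_inner_scale)
qed

text \<open>Note the index shift: \<open>theta_seq k\<close> is \<open>\<theta>\<^sub>k\<^sub>-\<^sub>1\<close>.\<close>

definition potential :: "nat \<Rightarrow> ('v,'x) dual \<Rightarrow> ('v,'x) dual \<times> ('v,'x) dual \<Rightarrow> real" where
  "potential k u st = 1 / theta_seq k^2 * (L (fst st) - L u)
     + 4 * real (card E)^2 * eta * sq_norm (\<lambda>e i x. snd st e i x - u e i x)"

lemma potential_step:
  assumes "E \<noteq> {}"
  shows "(\<Sum>b\<in>P. potential (Suc k) u (accel_step E X Cv Ce eta k st b)) \<le> real (card P) * potential k u st"
proof -
  obtain lam v where st: "st = (lam, v)"
    by fastforce
  define th where "th = theta_seq (Suc k)"
  define y where "y = (\<lambda>e i x. th * v e i x + (1 - th) * lam e i x)"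
  define m where "m = real (card E)"
  define a where "a = 1 / (4 * m * eta * th)"
  define v' where "v' e0 i0 e i x = (if e = e0 \<and> i = i0 then v e i x - a * grad y e i x else v e i x)" for e0 i0 e i x
  have step: "accel_step E X Cv Ce eta k (lam, v) (e0, i0) = (block_update y e0 i0, v' e0 i0)" for e0 i0
    unfolding v'_def a_def m_def y_def th_def using accel_step_eq[of k lam v e0 i0]
    by (simp del: theta_seq.simps)
  have m: "m > 0"
    using assms finite_E by (simp add: m_def card_gt_0_iff)
  have th: "0 < th" "th \<le> 1" "theta_seq k > 0"
    using theta_seq_bounds[of "Suc k"] theta_seq_bounds[of k] by (auto simp: th_def simp del: theta_seq.simps)
  have "(\<Sum>b\<in>P. potential (Suc k) u (accel_step E X Cv Ce eta k st b))
      = (\<Sum>(e0,i0)\<in>P. potential (Suc k) u (block_update y e0 i0, v' e0 i0))"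
    unfolding st by (intro sum.cong refl) (auto simp: step)
  also have "\<dots> = 1/th^2 * ((\<Sum>(e,i)\<in>P. L (block_update y e i)) - real (card P) * L u)
        + (4*m^2*eta) * (\<Sum>(e0,i0)\<in>P. sq_norm (\<lambda>e i x. v' e0 i0 e i x - u e i x))"
    unfolding potential_def th_def m_def
    by (simp add: split_def sum.distrib sum_subtractf sum_distrib_left sum_divide_distrib[symmetric]
        del: theta_seq.simps)
  also have "\<dots> \<le> real (card P) * (1/theta_seq k^2 * (L lam - L u) + (4*m^2*eta) * sq_norm (\<lambda>e i x. v e i x - u e i x))"
  proof (rule accelerated_potential_arith)
    show "(\<Sum>(e0,i0)\<in>P. sq_norm (\<lambda>e i x. v' e0 i0 e i x - u e i x))
        = real (card P) * sq_norm (\<lambda>e i x. v e i x - u e i x)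
          - 2 * (1 / (4 * m * eta * th)) * grad_inner y (\<lambda>e i x. v e i x - u e i x)
          + (1 / (4 * m * eta * th))^2 * (\<Sum>(e,i)\<in>P. \<Sum>x\<in>X. (grad y e i x)^2)"
      unfolding v'_def a_def[symmetric] by (rule sum_sq_norm_update_blocks)
    show "th * grad_inner y (\<lambda>e i x. v e i x - u e i x)
        = - th * grad_inner y (\<lambda>e i x. u e i x - y e i x) - (1 - th) * grad_inner y (\<lambda>e i x. lam e i x - y e i x)"
      unfolding y_def by (rule grad_inner_momentum)
  qed (use m eta_pos th theta_seq_Suc_sq[of k] sum_L_block_update_le L_ge_linearization
       in \<open>simp_all add: card_pairs m_def th_def del: theta_seq.simps\<close>)
  also have "\<dots> = real (card P) * potential k u st"
    by (simp add: potential_def st m_def)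
  finally show ?thesis .
qed

lemma sum_potential_iterates:
  assumes "E \<noteq> {}"
  shows "(\<Sum>xs\<in>{xs. set xs \<subseteq> P \<and> length xs = k}. potential k u (accel_iter E X Cv Ce eta (\<lambda>j. xs ! j) k))
        \<le> real (card P) ^ k * potential 0 u (\<lambda>_ _ _. 0, \<lambda>_ _ _. 0)"
proof (induction k)
  case 0
  have "{xs. set xs \<subseteq> P \<and> length xs = 0} = {[]}"
    by auto
  then show ?case
    by simp
next
  case (Suc k)
  have "(\<Sum>xs\<in>{xs. set xs \<subseteq> P \<and> length xs = Suc k}. potential (Suc k) u (accel_iter E X Cv Ce eta (\<lambda>j. xs ! j) (Suc k)))
      = (\<Sum>xs\<in>{xs. set xs \<subseteq> P \<and> length xs = k}.
          \<Sum>b\<in>P. potential (Suc k) u (accel_step E X Cv Ce eta k (accel_iter E X Cv Ce eta (\<lambda>j. xs ! j) k) b))"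
    unfolding sum_lists_length_Suc by (intro sum.cong refl) (auto simp flip: accel_iter_snoc)
  also have "\<dots> \<le> (\<Sum>xs\<in>{xs. set xs \<subseteq> P \<and> length xs = k}.
      real (card P) * potential k u (accel_iter E X Cv Ce eta (\<lambda>j. xs ! j) k))"
    using assms by (intro sum_mono potential_step)
  also have "\<dots> \<le> real (card P) * (real (card P) ^ k * potential 0 u (\<lambda>_ _ _. 0, \<lambda>_ _ _. 0))"
    unfolding sum_distrib_left[symmetric] by (intro mult_left_mono Suc.IH) simp
  finally show ?case
    by (simp add: ac_simps)
qed

lemma expected_L_gap:
  assumes "E \<noteq> {}"
  shows "expected_L V E X Cv Ce eta k - L u
     \<le> theta_seq k^2 * (L (\<lambda>_ _ _. 0) - L u + 4 * real (card E)^2 * eta * sq_norm u)"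
proof -
  define Ls where "Ls = {xs. set xs \<subseteq> P \<and> length xs = k}"
  define st where "st xs = accel_iter E X Cv Ce eta (\<lambda>j. xs ! j) k" for xs
  define N where "N = real (card P)"
  have N: "N > 0"
    using assms finite_E by (simp add: N_def card_pairs card_gt_0_iff)
  have card_Ls: "real (card Ls) = N ^ k"
    by (simp add: Ls_def N_def card_lists_length_eq finite_pairs)
  have gap: "L (fst (st xs)) - L u \<le> theta_seq k^2 * potential k u (st xs)" for xs
  proof -
    have "theta_seq k^2 * potential k u (st xs) = L (fst (st xs)) - L u
        + theta_seq k^2 * (4 * real (card E)^2 * eta * sq_norm (\<lambda>e i x. snd (st xs) e i x - u e i x))"
      using theta_seq_bounds[of k] by (simp add: potential_def field_simps del: theta_seq.simps)
    moreover have "0 \<le> theta_seq k^2 * (4 * real (card E)^2 * eta * sq_norm (\<lambda>e i x. snd (st xs) e i x - u e i x))"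
      using eta_pos sq_norm_nonneg by simp
    ultimately show ?thesis
      by linarith
  qed
  have "(\<Sum>xs\<in>Ls. L (fst (st xs))) - N^k * L u = (\<Sum>xs\<in>Ls. L (fst (st xs)) - L u)"
    using card_Ls by (simp add: sum_subtractf)
  also have "\<dots> \<le> theta_seq k^2 * (\<Sum>xs\<in>Ls. potential k u (st xs))"
    using gap by (simp add: sum_mono sum_distrib_left del: theta_seq.simps)
  also have "\<dots> \<le> theta_seq k^2 * (N ^ k * potential 0 u (\<lambda>_ _ _. 0, \<lambda>_ _ _. 0))"
    using sum_potential_iterates[OF assms, of k u] by (simp add: Ls_def st_def N_def mult_left_mono del: theta_seq.simps)
  finally have "((\<Sum>xs\<in>Ls. L (fst (st xs))) - N^k * L u) / N^k \<le> theta_seq k^2 * potential 0 u (\<lambda>_ _ _. 0, \<lambda>_ _ _. 0)"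
    using N by (simp add: field_simps del: theta_seq.simps)
  moreover have "((\<Sum>xs\<in>Ls. L (fst (st xs))) - N^k * L u) / N^k = expected_L V E X Cv Ce eta k - L u"
    using N by (simp add: expected_L_def Ls_def st_def N_def diff_divide_distrib)
  moreover have "potential 0 u (\<lambda>_ _ _. 0, \<lambda>_ _ _. 0) = L (\<lambda>_ _ _. 0) - L u + 4 * real (card E)^2 * eta * sq_norm u"
    by (simp add: potential_def sq_norm_def)
  ultimately show ?thesis
    by simp
qed

section \<open>Convergence rate\<close>

abbreviation G :: real where
  "G \<equiv> 24 * real (card E) * real (card X) * real (card E + card V) *
          (sqrt eta * Cn + ln (real (card X)) / sqrt eta)"

abbreviation level_radius :: real where
  "level_radius \<equiv> (real (card V) + real (card E)) * (Cn + ln (real (card X)) / eta)"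

lemma L_zero_le_level_radius:
  "L (\<lambda>_ _ _. 0) + (real (card V) + real (card E)) * Cn \<le> 2 * level_radius"
proof -
  define n m d where "n = real (card V)" and "m = real (card E)" and "d = real (card X)"
  have "L (\<lambda>_ _ _. 0) + (n + m) * Cn \<le> n * (Cn + ln d / eta) + m * (Cn + 2 * ln d / eta) + (n + m) * Cn"
    using L_zero_le by (simp add: n_def m_def d_def)
  also have "\<dots> = 2 * ((n + m) * (Cn + ln d / eta)) - n * (ln d / eta)"
    by (simp add: algebra_simps add_divide_distrib)
  also have "\<dots> \<le> 2 * ((n + m) * (Cn + ln d / eta))"
    using ln_ge_half[of d] card_X eta_pos by (simp add: n_def d_def)
  finally show ?thesis
    by (simp add: n_def m_def d_def)
qed

lemma sublevel_bounds:
  assumes below: "L w \<le> L (\<lambda>_ _ _. 0)"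
  shows "L (\<lambda>_ _ _. 0) - L (center_blocks w) \<le> 2 * level_radius"
    and "sq_norm (center_blocks w) \<le> 16 * real (card X)^2 * level_radius^2"
proof -
  define K where "K = L (center_blocks w) + (real (card V) + real (card E)) * Cn"
  have K: "0 \<le> K" "K \<le> 2 * level_radius"
    using L_ge[of "center_blocks w"] below L_zero_le_level_radius by (simp_all add: K_def L_center_blocks algebra_simps)
  then show "L (\<lambda>_ _ _. 0) - L (center_blocks w) \<le> 2 * level_radius"
    using L_zero_le_level_radius by (simp add: K_def)
  have "sqrt (sq_norm (center_blocks w)) \<le> 2 * real (card X) * K"
    unfolding K_def using sum_center_blocks by (rule L_coercive)
  also have "\<dots> \<le> 2 * real (card X) * (2 * level_radius)"
    using K by (intro mult_left_mono) auto
  finally show "sq_norm (center_blocks w) \<le> 16 * real (card X)^2 * level_radius^2"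
    by (auto dest: sqrt_le_D simp: power_mult_distrib)
qed

lemma expected_L_gap_of_le_L_zero:
  assumes "E \<noteq> {}" and below: "L w \<le> L (\<lambda>_ _ _. 0)"
  shows "expected_L V E X Cv Ce eta k - L w \<le> G^2 / (real k + 2)^2"
proof -
  define m d where "m = real (card E)" and "d = real (card X)"
  define u where "u = center_blocks w"
  have "expected_L V E X Cv Ce eta k - L u
      \<le> theta_seq k^2 * (L (\<lambda>_ _ _. 0) - L u + 4 * m^2 * eta * sq_norm u)"
    using expected_L_gap[OF assms(1)] by (simp add: m_def)
  also have "\<dots> \<le> 4 / (real k + 2)^2 * (2 * level_radius + 64 * m^2 * d^2 * eta * level_radius^2)"
  proof (rule mult_mono)
    have "4 * m^2 * eta * sq_norm u \<le> 4 * m^2 * eta * (16 * d^2 * level_radius^2)"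
      using eta_pos sublevel_bounds(2)[OF below] by (intro mult_left_mono) (simp_all add: u_def d_def)
    also have "\<dots> = 64 * m^2 * d^2 * eta * level_radius^2"
      by simp
    finally show "L (\<lambda>_ _ _. 0) - L u + 4 * m^2 * eta * sq_norm u \<le> 2 * level_radius + 64 * m^2 * d^2 * eta * level_radius^2"
      using sublevel_bounds(1)[OF below] unfolding u_def by linarith
    show "0 \<le> L (\<lambda>_ _ _. 0) - L u + 4 * m^2 * eta * sq_norm u"
      using below eta_pos sq_norm_nonneg[of u] by (simp add: u_def L_center_blocks)
  qed (simp_all add: theta_seq_sq_le)
  also have "\<dots> \<le> G^2 / (real k + 2)^2"
    using accel_emp_rate_constant[of m d "real (card V)" Cn "ln d" eta] assms(1) finite_E card_X
      cost_norm_nonneg[OF assms(1)] ln_ge_half[of d] eta_pos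
    by (simp add: m_def d_def Suc_le_eq card_gt_0_iff divide_right_mono add.commute)
  finally show ?thesis
    by (simp add: u_def L_center_blocks)
qed

text \<open>Only points of the sublevel set \<open>{w. L w \<le> L 0}\<close> matter: outside it the bound
  for \<open>w = 0\<close> is stronger.\<close>

lemma expected_L_gap_Inf:
  assumes "E \<noteq> {}"
  shows "expected_L V E X Cv Ce eta k - (INF lam. L lam) \<le> G^2 / (real k + 2)^2"
proof -
  have "expected_L V E X Cv Ce eta k - G^2 / (real k + 2)^2 \<le> L w" for w
  proof (cases "L w \<le> L (\<lambda>_ _ _. 0)")
    case True
    then show ?thesis
      using expected_L_gap_of_le_L_zero[OF assms True, of k] by linarith
  next
    case False
    then show ?thesis
      using expected_L_gap_of_le_L_zero[OF assms order.refl, of k] by linarith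
  qed
  then have "expected_L V E X Cv Ce eta k - G^2 / (real k + 2)^2 \<le> (INF lam. L lam)"
    by (intro cINF_greatest) auto
  then show ?thesis
    by simp
qed

end

theorem lemma4:
  fixes V :: "'v set" and E :: "'v set set" and X :: "'x set"
    and Cv :: "'v \<Rightarrow> 'x \<Rightarrow> real" and Ce :: "'v set \<Rightarrow> ('v \<Rightarrow> 'x) \<Rightarrow> real"
    and eta :: real and k :: nat
  assumes "finite V"
    and "\<forall>e\<in>E. e \<subseteq> V \<and> card e = 2"
    and "\<forall>i\<in>V. \<exists>e\<in>E. i \<in> e"
    and "finite X" and "card X \<ge> 2"
    and "eta > 0"
  shows "expected_L V E X Cv Ce eta k - (INF lam. Lfun V E X Cv Ce eta lam)
     \<le> (24 * real (card E) * real (card X) * real (card E + card V) *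
          (sqrt eta * cost_norm V E X Cv Ce + ln (real (card X)) / sqrt eta))^2
        / (real k + 2)^2"
proof (cases "E = {}")
  case True
  then have "V = {}"
    using assms(3) by auto
  then have "Lfun V E X Cv Ce eta lam = 0" for lam
    using True by (simp add: Lfun_def)
  then show ?thesis
    by (simp add: expected_L_def)
next
  case False
  interpret emp_model V E X Cv Ce eta
    using assms by unfold_locales auto
  show ?thesis
    using expected_L_gap_Inf[OF False] .
qed

end
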